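(* Let $H_A$ on $\mathcal H_A$ ($\dim d_A$) and $H_B$ on $\mathcal H_B$ ($\dim d_B$) be Hermitian, fix orthonormal bases and integers $1\le d_{A'}\le d_A$, $1\le d_{B'}\le d_B$, and write $$H_A=\begin{pmatrix} J_\parallel & C^\dagger\\ C & J_\perp\end{pmatrix},\qquad H_B=\begin{pmatrix} K_\parallel & D^\dagger\\ D & K_\perp\end{pmatrix},$$ where $J_\parallel$ ($K_\parallel$) is the compression of $H_A$ ($H_B$) to the span of the first $d_{A'}$ ($d_{B'}$) basis vectors. Then $H=H_A\otimes H_B$ can simulate $H'=J_\parallel\otimes K_\parallel$ (acting on systems of dimensions $d_{A'}$, $d_{B'}$) with rate $\gamma_{H'|H}\ge 1$. More generally, if $H=\sum_i J_i\otimes K_i$, the same holds for $H'=\sum_i J_{i\parallel}\otimes K_{i\parallel}$.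
   Context: All Hamiltonians are Hermitian operators on finite-dimensional Hilbert spaces. A bipartite Hamiltonian acts on $\mathcal H_A\otimes\mathcal H_B$, with system $A$ held by Alice and $B$ by Bob; it is local if it has the form $H_A\otimes I_B+I_A\otimes H_B$ and nonlocal otherwise. Simulation model: given a bipartite Hamiltonian $H$, Alice and Bob may attach or discard local ancillary systems of arbitrary finite dimension (on which $H$ acts trivially), apply arbitrary instantaneous local unitaries $U_A\otimes U_B$ (each acting on that party's system together with their ancillas), and switch $H$ on for chosen time intervals; the goal is to track (stroboscopically, for arbitrarily finely spaced times) the evolution $e^{-iH't}$ of a target bipartite Hamiltonian $H'$. The simulation rate $\gamma_{H'|H}$ is the supremum of $\gamma\ge 0$ such that evolution under $H'$ for any time $t$ can be achieved in this way (in the limit of arbitrarily fine time slicing) using $H$ for total time $t/\gamma$. The elementary allowed simulations are: rescaling ($cH$, $c>0$, is obtained from $H$ at rate $1/c$ and conversely); appending ancillas ($H$ and $H\otimes I_{A'B'}$ simulate each other at rate 1); adding local Hamiltonians at no cost; conjugation by local unitaries ($H$ and $UHU^\dagger$, $U=U_A\otimes U_B$, simulate each other at rate 1); and time sharing (using $H_1$ a fraction $p$ of the time and $H_2$ a fraction $1-p$ yields $pH_1+(1-p)H_2$ at rate $\ge 1$, by the Lie–Trotter formula), and compositions of these. *)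

theory Defs
  imports Complex_Main "HOL-Library.Extended_Real" "Jordan_Normal_Form.Schur_Decomposition"
begin

text \<open>A bipartite system C^dA (x) C^dB is identified with C^(dA*dB); the basis
  vector |a>|b> has index a*dB+b (standard Kronecker ordering).\<close>

definition hermitian_mat :: "nat \<Rightarrow> complex mat \<Rightarrow> bool" where
  "hermitian_mat n H \<longleftrightarrow> H \<in> carrier_mat n n \<and> mat_adjoint H = H"

definition unitary_mat :: "nat \<Rightarrow> complex mat \<Rightarrow> bool" where
  "unitary_mat n U \<longleftrightarrow> U \<in> carrier_mat n n \<and> mat_adjoint U * U = 1\<^sub>m n"

definition kron :: "complex mat \<Rightarrow> complex mat \<Rightarrow> complex mat" where
  "kron A B = mat (dim_row A * dim_row B) (dim_col A * dim_col B)
     (\<lambda>(i,j). A $$ (i div dim_row B, j div dim_col B) * B $$ (i mod dim_row B, j mod dim_col B))"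

definition mexp :: "complex mat \<Rightarrow> complex mat" where
  "mexp A = mat (dim_row A) (dim_col A)
     (\<lambda>(i,j). (\<Sum>k. (A ^\<^sub>m k) $$ (i,j) / of_nat (fact k)))"

definition evol :: "complex mat \<Rightarrow> real \<Rightarrow> complex mat" where
  "evol H t = mexp ((- \<i> * complex_of_real t) \<cdot>\<^sub>m H)"

definition vnorm :: "complex vec \<Rightarrow> real" where
  "vnorm v = sqrt (\<Sum>i<dim_vec v. (cmod (v $ i))\<^sup>2)"

definition compress :: "nat \<Rightarrow> complex mat \<Rightarrow> complex mat" where
  "compress m J = mat m m (\<lambda>(i,j). J $$ (i,j))"

text \<open>H acts on A (dim dA) (x) B (dim dB); the target H'
  acts on A' (dim dA') (x) B' (dim dB').  Alice's workspace is
  A (x) A' (x) N_A (dimension dA*dA'*nA, index (a*dA'+a')*nA+n), Bob's is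
  B (x) B' (x) N_B; N_A, N_B are ancillas of arbitrary finite dimension.
  The total space is Alice-workspace (x) Bob-workspace.\<close>

definition wsA :: "nat \<Rightarrow> nat \<Rightarrow> nat \<Rightarrow> nat" where
  "wsA d d' n = d * d' * n"

definition ws_dec :: "nat \<Rightarrow> nat \<Rightarrow> nat \<Rightarrow> nat \<times> nat \<times> nat" where
  "ws_dec d' n \<alpha> = (\<alpha> div (d' * n), (\<alpha> div n) mod d', \<alpha> mod n)"

text \<open>H acting on the A,B factors, identity on A',B' and the ancillas.\<close>
definition ext_ham :: "nat \<Rightarrow> nat \<Rightarrow> nat \<Rightarrow> nat \<Rightarrow> nat \<Rightarrow> nat \<Rightarrow> complex mat \<Rightarrow> complex mat" where
  "ext_ham dA dA' nA dB dB' nB H =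
    (let wB = wsA dB dB' nB; N = wsA dA dA' nA * wB in
     mat N N (\<lambda>(i,j).
       (case (ws_dec dA' nA (i div wB), ws_dec dB' nB (i mod wB),
              ws_dec dA' nA (j div wB), ws_dec dB' nB (j mod wB)) of
         ((a,x,n),(b,y,m),(a2,x2,n2),(b2,y2,m2)) \<Rightarrow>
           if x = x2 \<and> n = n2 \<and> y = y2 \<and> m = m2
           then H $$ (a * dB + b, a2 * dB + b2) else 0)))"

text \<open>Embedding of a state v of A'B' together with a state phi of the rest
  (A N_A B N_B, index ((a*nA+n)*dB + b)*nB + m) into the total space.
  With phi = |0...0> this is the initial state (ancillas attached in |0>).\<close>
definition place :: "nat \<Rightarrow> nat \<Rightarrow> nat \<Rightarrow> nat \<Rightarrow> nat \<Rightarrow> nat \<Rightarrow> complex vec \<Rightarrow> complex vec \<Rightarrow> complex vec" where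
  "place dA dA' nA dB dB' nB v phi =
    (let wB = wsA dB dB' nB; N = wsA dA dA' nA * wB in
     vec N (\<lambda>i.
       (case (ws_dec dA' nA (i div wB), ws_dec dB' nB (i mod wB)) of
         ((a,x,n),(b,y,m)) \<Rightarrow>
            v $ (x * dB' + y) * phi $ (((a * nA + n) * dB + b) * nB + m))))"

definition ket0 :: "nat \<Rightarrow> complex vec" where
  "ket0 N = vec N (\<lambda>i. if i = 0 then 1 else 0)"

text \<open>A step (UA, UB, tau): apply the instantaneous local unitary UA (x) UB,
  then switch on H for time tau.\<close>
definition run_steps :: "complex mat \<Rightarrow> (complex mat \<times> complex mat \<times> real) list \<Rightarrow> complex vec \<Rightarrow> complex vec" where
  "run_steps Ht steps v0 = foldl (\<lambda>v (UA, UB, tau). evol Ht tau *\<^sub>v (kron UA UB *\<^sub>v v)) v0 steps"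

text \<open>A protocol is a list of segments (steps, (WA, WB), s): after the steps
  of segments 0..j the evolution e^{-iH's_j} must be available (up to error
  eps, for every normalised input) after the local unitary WA (x) WB
  (which can be undone / absorbed into the next local unitary).
  Checkpoint times s_j are increasing with gaps \<le> delta, the last being t;
  total time for which H is switched on is t/gamma.\<close>
definition achieves ::
  "nat \<Rightarrow> nat \<Rightarrow> complex mat \<Rightarrow> nat \<Rightarrow> nat \<Rightarrow> complex mat \<Rightarrow> real \<Rightarrow> bool" where
  "achieves dA dB H dA' dB' H' \<gamma> \<longleftrightarrow> \<gamma> > 0 \<and>
    (\<forall>t>0. \<forall>\<epsilon>>0. \<forall>\<delta>>0. \<exists>nA nB.
      \<exists>segs :: ((complex mat \<times> complex mat \<times> real) list \<times> (complex mat \<times> complex mat) \<times> real) list.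
        nA \<ge> 1 \<and> nB \<ge> 1 \<and> segs \<noteq> [] \<and>
        (\<forall>seg\<in>set segs. (\<forall>(UA, UB, tau)\<in>set (fst seg).
              unitary_mat (wsA dA dA' nA) UA \<and> unitary_mat (wsA dB dB' nB) UB \<and> tau \<ge> 0) \<and>
           unitary_mat (wsA dA dA' nA) (fst (fst (snd seg))) \<and>
           unitary_mat (wsA dB dB' nB) (snd (fst (snd seg)))) \<and>
        (\<forall>j<length segs. 0 < snd (snd (segs ! j)) \<and>
            (j = 0 \<longrightarrow> snd (snd (segs ! j)) \<le> \<delta>) \<and>
            (j > 0 \<longrightarrow> snd (snd (segs ! (j - 1))) < snd (snd (segs ! j)) \<and>
                       snd (snd (segs ! j)) - snd (snd (segs ! (j - 1))) \<le> \<delta>)) \<and>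
        snd (snd (last segs)) = t \<and>
        (\<Sum>seg\<leftarrow>segs. \<Sum>(UA, UB, tau)\<leftarrow>fst seg. tau) = t / \<gamma> \<and>
        (\<forall>\<psi>. dim_vec \<psi> = dA' * dB' \<and> vnorm \<psi> = 1 \<longrightarrow>
          (\<forall>j<length segs.
             \<exists>\<phi>. dim_vec \<phi> = dA * nA * dB * nB \<and>
               vnorm (kron (fst (fst (snd (segs ! j)))) (snd (fst (snd (segs ! j))))
                        *\<^sub>v run_steps (ext_ham dA dA' nA dB dB' nB H)
                               (concat (map fst (take (Suc j) segs)))
                               (place dA dA' nA dB dB' nB \<psi> (ket0 (dA * nA * dB * nB)))
                      - place dA dA' nA dB dB' nB (evol H' (snd (snd (segs ! j))) *\<^sub>v \<psi>) \<phi>)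
               \<le> \<epsilon>)))"

definition msum :: "nat \<Rightarrow> complex mat list \<Rightarrow> complex mat" where
  "msum n Ms = foldr (+) Ms (0\<^sub>m n n)"

definition sim_rate :: "nat \<Rightarrow> nat \<Rightarrow> complex mat \<Rightarrow> nat \<Rightarrow> nat \<Rightarrow> complex mat \<Rightarrow> ereal" where
  "sim_rate dA dB H dA' dB' H' = Sup (ereal ` {\<gamma>. achieves dA dB H dA' dB' H' \<gamma>})"

end

(* Alice and Bob first swap the input from the primed registers into the lowest dA' (resp. dB')
   levels of A and B.  Let Z_A, Z_B be the local reflections that are +1 on these levels and -1
   on the others.  The average of Z H Z over Z in {1, Z_A, Z_B, Z_A Z_B} is block diagonal with
   respect to the four sign sectors, and on the sector where both reflections are +1, which
   contains the embedded input, it acts as the local compression of H; for H = sum_i J_i (x) K_i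
   this is sum_i J_i,par (x) K_i,par.  Running H conjugated by each of the four reflections for
   a quarter of a short time tau is therefore, on the embedded input, a first-order Trotter step
   for e^(-i H' tau) with error O(tau^2).  Repeating it t/tau times uses H for time t and has
   total error O(t tau), which vanishes as tau -> 0; hence the rate 1 is achieved. *)

theory Submission
  imports Defs "HOL-Analysis.L2_Norm"
begin

section \<open>Matrix and vector norms\<close>

lemma mat_adjoint_dim [simp]:
  "dim_row (mat_adjoint A) = dim_col A" "dim_col (mat_adjoint A) = dim_row A"
  by (auto simp: mat_adjoint_def)

lemma index_mat_adjoint [simp]:
  "i < dim_col A \<Longrightarrow> j < dim_row A \<Longrightarrow> mat_adjoint A $$ (i, j) = cnj (A $$ (j, i))"
  by (simp add: mat_adjoint_def mat_of_rows_def)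

lemma mat_adjoint_carrier [simp]: "A \<in> carrier_mat n m \<Longrightarrow> mat_adjoint A \<in> carrier_mat m n"
  by (metis mat_adjoint_dim carrier_matD(1,2) carrier_matI)

lemma index_mult_mat_sum:
  "A \<in> carrier_mat n m \<Longrightarrow> B \<in> carrier_mat m k \<Longrightarrow> i < n \<Longrightarrow> j < k \<Longrightarrow>
   (A * B) $$ (i, j) = (\<Sum>l<m. A $$ (i, l) * B $$ (l, j))"
  by (simp add: scalar_prod_def atLeast0LessThan)

lemma index_mult_mat_vec_sum:
  "A \<in> carrier_mat n m \<Longrightarrow> v \<in> carrier_vec m \<Longrightarrow> i < n \<Longrightarrow>
   (A *\<^sub>v v) $ i = (\<Sum>l<m. A $$ (i, l) * v $ l)"
  by (simp add: scalar_prod_def atLeast0LessThan)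

definition mat_l1_norm :: "complex mat \<Rightarrow> real" where
  "mat_l1_norm A = (\<Sum>i<dim_row A. \<Sum>j<dim_col A. cmod (A $$ (i, j)))"

lemma mat_l1_norm_nonneg: "mat_l1_norm A \<ge> 0"
  unfolding mat_l1_norm_def by (intro sum_nonneg) auto

lemma norm_index_le_mat_l1_norm:
  assumes "i < dim_row A" "j < dim_col A"
  shows "cmod (A $$ (i, j)) \<le> mat_l1_norm A"
proof -
  have "cmod (A $$ (i, j)) \<le> (\<Sum>j<dim_col A. cmod (A $$ (i, j)))"
    using assms by (intro member_le_sum) auto
  also have "\<dots> \<le> mat_l1_norm A"
    unfolding mat_l1_norm_def using assms
    by (intro member_le_sum[where f = "\<lambda>i. \<Sum>j<dim_col A. cmod (A $$ (i, j))"]) (auto intro: sum_nonneg)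
  finally show ?thesis .
qed

lemma mat_l1_norm_le_entrywise:
  assumes "A \<in> carrier_mat n m" "\<And>i j. i < n \<Longrightarrow> j < m \<Longrightarrow> cmod (A $$ (i, j)) \<le> b"
  shows "mat_l1_norm A \<le> real n * real m * b"
proof -
  have "mat_l1_norm A = (\<Sum>i<n. \<Sum>j<m. cmod (A $$ (i, j)))"
    using assms(1) by (simp add: mat_l1_norm_def)
  also have "\<dots> \<le> (\<Sum>i<n. \<Sum>j<m. b)" by (intro sum_mono assms(2)) auto
  finally show ?thesis by simp
qed

lemma mat_l1_norm_mult:
  assumes A: "A \<in> carrier_mat n m" and B: "B \<in> carrier_mat m k"
  shows "mat_l1_norm (A * B) \<le> mat_l1_norm A * mat_l1_norm B"
proof -
  have "mat_l1_norm (A * B) = (\<Sum>i<n. \<Sum>j<k. cmod (\<Sum>l<m. A $$ (i, l) * B $$ (l, j)))"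
    using A B unfolding mat_l1_norm_def
    by (auto simp: scalar_prod_def atLeast0LessThan intro!: sum.cong)
  also have "\<dots> \<le> (\<Sum>i<n. \<Sum>j<k. \<Sum>l<m. \<Sum>l'<m. cmod (A $$ (i, l)) * cmod (B $$ (l', j)))"
  proof (intro sum_mono)
    fix i j
    have "cmod (\<Sum>l<m. A $$ (i, l) * B $$ (l, j)) \<le> (\<Sum>l<m. cmod (A $$ (i, l)) * cmod (B $$ (l, j)))"
      by (rule order_trans[OF norm_sum]) (simp add: norm_mult)
    also have "\<dots> \<le> (\<Sum>l<m. \<Sum>l'<m. cmod (A $$ (i, l)) * cmod (B $$ (l', j)))"
      by (intro sum_mono member_le_sum[where f = "\<lambda>l'. cmod (A $$ (i, _)) * cmod (B $$ (l', j))"]) auto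
    finally show "cmod (\<Sum>l<m. A $$ (i, l) * B $$ (l, j))
      \<le> (\<Sum>l<m. \<Sum>l'<m. cmod (A $$ (i, l)) * cmod (B $$ (l', j)))" .
  qed
  also have "\<dots> = (\<Sum>i<n. \<Sum>l<m. cmod (A $$ (i, l))) * (\<Sum>l'<m. \<Sum>j<k. cmod (B $$ (l', j)))"
  proof -
    have "(\<Sum>j<k. \<Sum>l<m. \<Sum>l'<m. cmod (A $$ (i, l)) * cmod (B $$ (l', j))) =
          (\<Sum>l<m. cmod (A $$ (i, l)) * (\<Sum>l'<m. \<Sum>j<k. cmod (B $$ (l', j))))" for i
      by (subst sum.swap, subst (2) sum.swap) (simp add: sum_distrib_left)
    then show ?thesis by (simp add: sum_distrib_right)
  qed
  also have "\<dots> = mat_l1_norm A * mat_l1_norm B"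
    using A B by (simp add: mat_l1_norm_def)
  finally show ?thesis .
qed

lemma mat_l1_norm_add:
  assumes "A \<in> carrier_mat n m" "B \<in> carrier_mat n m"
  shows "mat_l1_norm (A + B) \<le> mat_l1_norm A + mat_l1_norm B"
proof -
  have "mat_l1_norm (A + B) = (\<Sum>i<n. \<Sum>j<m. cmod (A $$ (i, j) + B $$ (i, j)))"
    using assms by (simp add: mat_l1_norm_def)
  also have "\<dots> \<le> (\<Sum>i<n. \<Sum>j<m. cmod (A $$ (i, j)) + cmod (B $$ (i, j)))"
    by (intro sum_mono norm_triangle_ineq)
  also have "\<dots> = mat_l1_norm A + mat_l1_norm B"
    using assms by (simp add: mat_l1_norm_def sum.distrib)
  finally show ?thesis .
qed

lemma mat_l1_norm_add4:
  assumes "A \<in> carrier_mat n m" "B \<in> carrier_mat n m" "C \<in> carrier_mat n m" "D \<in> carrier_mat n m"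
  shows "mat_l1_norm (A + B + C + D) \<le> mat_l1_norm A + mat_l1_norm B + mat_l1_norm C + mat_l1_norm D"
proof -
  have "mat_l1_norm (A + B + C + D) \<le> mat_l1_norm (A + B + C) + mat_l1_norm D"
    using assms by (intro mat_l1_norm_add[of _ n m]) auto
  also have "mat_l1_norm (A + B + C) \<le> mat_l1_norm (A + B) + mat_l1_norm C"
    using assms by (intro mat_l1_norm_add[of _ n m]) auto
  also have "mat_l1_norm (A + B) \<le> mat_l1_norm A + mat_l1_norm B"
    using assms by (intro mat_l1_norm_add[of _ n m]) auto
  finally show ?thesis by simp
qed

lemma mat_l1_norm_diff:
  assumes "A \<in> carrier_mat n m" "B \<in> carrier_mat n m"
  shows "mat_l1_norm (A - B) \<le> mat_l1_norm A + mat_l1_norm B"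
proof -
  have "mat_l1_norm (A - B) = (\<Sum>i<n. \<Sum>j<m. cmod (A $$ (i, j) - B $$ (i, j)))"
    using assms by (simp add: mat_l1_norm_def)
  also have "\<dots> \<le> (\<Sum>i<n. \<Sum>j<m. cmod (A $$ (i, j)) + cmod (B $$ (i, j)))"
    by (intro sum_mono norm_triangle_ineq4)
  also have "\<dots> = mat_l1_norm A + mat_l1_norm B"
    using assms by (simp add: mat_l1_norm_def sum.distrib)
  finally show ?thesis .
qed

lemma mat_l1_norm_smult: "mat_l1_norm (c \<cdot>\<^sub>m A) = cmod c * mat_l1_norm A"
  by (simp add: mat_l1_norm_def norm_mult sum_distrib_left)

lemma mat_l1_norm_one: "mat_l1_norm (1\<^sub>m n) = real n"
proof -
  have "mat_l1_norm (1\<^sub>m n) = (\<Sum>i<n. \<Sum>j<n. if i = j then 1 else 0)"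
    unfolding mat_l1_norm_def by (intro sum.cong) auto
  also have "\<dots> = (\<Sum>i<n. 1)"
    by (intro sum.cong) auto
  finally show ?thesis by simp
qed

lemma mat_l1_norm_pow:
  assumes "A \<in> carrier_mat n n"
  shows "mat_l1_norm (A ^\<^sub>m k) \<le> real n * mat_l1_norm A ^ k"
proof (induction k)
  case 0
  then show ?case using assms by (simp add: mat_l1_norm_one)
next
  case (Suc k)
  have "mat_l1_norm (A ^\<^sub>m Suc k) \<le> mat_l1_norm (A ^\<^sub>m k) * mat_l1_norm A"
    using assms by (auto intro: mat_l1_norm_mult)
  also have "\<dots> \<le> real n * mat_l1_norm A ^ k * mat_l1_norm A"
    using Suc mat_l1_norm_nonneg by (intro mult_right_mono) auto
  finally show ?case by (simp add: mult_ac)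
qed

lemma vnorm_eq_L2_set: "vnorm v = L2_set (\<lambda>i. cmod (v $ i)) {..<dim_vec v}"
  by (simp add: vnorm_def L2_set_def)

lemma vnorm_nonneg: "vnorm v \<ge> 0"
  by (simp add: vnorm_eq_L2_set)

lemma norm_index_le_vnorm: "i < dim_vec v \<Longrightarrow> cmod (v $ i) \<le> vnorm v"
  unfolding vnorm_eq_L2_set by (rule member_le_L2_set) auto

lemma vnorm_mult_mat_vec_le:
  assumes A: "A \<in> carrier_mat n m" and v: "v \<in> carrier_vec m"
  shows "vnorm (A *\<^sub>v v) \<le> mat_l1_norm A * vnorm v"
proof -
  have "vnorm (A *\<^sub>v v) \<le> (\<Sum>i<n. cmod ((A *\<^sub>v v) $ i))"
    unfolding vnorm_eq_L2_set using A by (intro order_trans[OF L2_set_le_sum]) auto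
  also have "\<dots> \<le> (\<Sum>i<n. \<Sum>l<m. cmod (A $$ (i, l)) * vnorm v)"
  proof (intro sum_mono)
    fix i assume i: "i \<in> {..<n}"
    have "cmod ((A *\<^sub>v v) $ i) \<le> (\<Sum>l<m. cmod (A $$ (i, l)) * cmod (v $ l))"
      using i by (simp add: index_mult_mat_vec_sum[OF A v] norm_mult order_trans[OF norm_sum])
    also have "\<dots> \<le> (\<Sum>l<m. cmod (A $$ (i, l)) * vnorm v)"
      using v by (intro sum_mono mult_left_mono norm_index_le_vnorm) auto
    finally show "cmod ((A *\<^sub>v v) $ i) \<le> (\<Sum>l<m. cmod (A $$ (i, l)) * vnorm v)" .
  qed
  also have "\<dots> = mat_l1_norm A * vnorm v"
    using A by (simp add: mat_l1_norm_def sum_distrib_right)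
  finally show ?thesis .
qed

lemma vnorm_add_le:
  assumes "u \<in> carrier_vec n" "v \<in> carrier_vec n"
  shows "vnorm (u + v) \<le> vnorm u + vnorm v"
proof -
  have "vnorm (u + v) = L2_set (\<lambda>i. cmod (u $ i + v $ i)) {..<n}"
    unfolding vnorm_eq_L2_set using assms by (auto intro!: L2_set_cong)
  also have "\<dots> \<le> L2_set (\<lambda>i. cmod (u $ i) + cmod (v $ i)) {..<n}"
    by (intro L2_set_mono norm_triangle_ineq) auto
  also have "\<dots> \<le> vnorm u + vnorm v"
    using assms by (simp add: vnorm_eq_L2_set L2_set_triangle_ineq)
  finally show ?thesis .
qed

lemma of_real_vnorm_square: "complex_of_real ((vnorm v)\<^sup>2) = (\<Sum>i<dim_vec v. cnj (v $ i) * v $ i)"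
proof -
  have "(vnorm v)\<^sup>2 = (\<Sum>i<dim_vec v. (cmod (v $ i))\<^sup>2)"
    unfolding vnorm_def by (simp add: sum_nonneg)
  then show ?thesis
    by (simp only: of_real_sum) (rule sum.cong[OF refl], subst complex_norm_square, simp add: mult.commute)
qed

lemma vnorm_unitary:
  assumes "unitary_mat n U" and v: "v \<in> carrier_vec n"
  shows "vnorm (U *\<^sub>v v) = vnorm v"
proof -
  have U: "U \<in> carrier_mat n n" and UU: "mat_adjoint U * U = 1\<^sub>m n"
    using assms(1) by (auto simp: unitary_mat_def)
  have columns_orthonormal: "(\<Sum>i<n. cnj (U $$ (i, k)) * U $$ (i, l)) = (if k = l then 1 else 0)"
    if "k < n" "l < n" for k l
  proof -
    have "(mat_adjoint U * U) $$ (k, l) = (\<Sum>i<n. cnj (U $$ (i, k)) * U $$ (i, l))"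
      using that U by (subst index_mult_mat_sum[of _ n n _ n]) auto
    then show ?thesis using UU that by simp
  qed
  have "complex_of_real ((vnorm (U *\<^sub>v v))\<^sup>2) = (\<Sum>i<n. cnj ((U *\<^sub>v v) $ i) * (U *\<^sub>v v) $ i)"
    by (simp only: of_real_vnorm_square) (use U in simp)
  also have "\<dots> = (\<Sum>i<n. cnj (\<Sum>k<n. U $$ (i, k) * v $ k) * (\<Sum>l<n. U $$ (i, l) * v $ l))"
    by (intro sum.cong refl, simp only: index_mult_mat_vec_sum[OF U v] lessThan_iff)
  also have "\<dots> = (\<Sum>i<n. \<Sum>k<n. \<Sum>l<n. cnj (v $ k) * v $ l * (cnj (U $$ (i, k)) * U $$ (i, l)))"
    by (simp add: sum_distrib_left sum_distrib_right mult_ac)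
  also have "\<dots> = (\<Sum>k<n. \<Sum>l<n. \<Sum>i<n. cnj (v $ k) * v $ l * (cnj (U $$ (i, k)) * U $$ (i, l)))"
    by (subst sum.swap) (rule sum.cong[OF refl], rule sum.swap)
  also have "\<dots> = (\<Sum>k<n. \<Sum>l<n. cnj (v $ k) * v $ l * (if k = l then 1 else 0))"
    by (intro sum.cong refl) (simp add: sum_distrib_left[symmetric] columns_orthonormal)
  also have "\<dots> = (\<Sum>k<n. cnj (v $ k) * v $ k)"
    by (simp add: if_distrib cong: if_cong)
  also have "\<dots> = complex_of_real ((vnorm v)\<^sup>2)"
    by (simp only: of_real_vnorm_square) (use v in simp)
  finally have "(vnorm (U *\<^sub>v v))\<^sup>2 = (vnorm v)\<^sup>2"
    using of_real_eq_iff by blast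
  then show ?thesis using vnorm_nonneg by (simp add: power2_eq_iff_nonneg)
qed

section \<open>The matrix exponential\<close>

lemma pow_mat_smult:
  fixes A :: "'a :: comm_semiring_1 mat"
  assumes A: "A \<in> carrier_mat n n"
  shows "(c \<cdot>\<^sub>m A) ^\<^sub>m k = c ^ k \<cdot>\<^sub>m (A ^\<^sub>m k)"
proof (induction k)
  case 0
  then show ?case using A by (auto intro!: eq_matI)
next
  case (Suc k)
  have "(c \<cdot>\<^sub>m A) ^\<^sub>m Suc k = (c ^ k \<cdot>\<^sub>m A ^\<^sub>m k) * (c \<cdot>\<^sub>m A)"
    by (simp add: Suc)
  also have "\<dots> = c ^ k \<cdot>\<^sub>m (A ^\<^sub>m k * (c \<cdot>\<^sub>m A))"
    using A by (intro mult_smult_assoc_mat) auto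
  also have "A ^\<^sub>m k * (c \<cdot>\<^sub>m A) = c \<cdot>\<^sub>m (A ^\<^sub>m k * A)"
    using A by (intro mult_smult_distrib) auto
  finally show ?case using A by (auto intro!: eq_matI simp: mult_ac)
qed

lemma pow_mat_add:
  fixes A :: "'a :: semiring_1 mat"
  assumes A: "A \<in> carrier_mat n n"
  shows "A ^\<^sub>m k * A ^\<^sub>m l = A ^\<^sub>m (k + l)"
proof (induction l)
  case 0
  then show ?case using A by simp
next
  case (Suc l)
  have "A ^\<^sub>m k * A ^\<^sub>m Suc l = (A ^\<^sub>m k * A ^\<^sub>m l) * A"
    using A by (simp add: assoc_mult_mat[of _ n n _ n _ n])
  then show ?case using Suc by simp
qed

definition mexp_term :: "complex mat \<Rightarrow> complex \<Rightarrow> nat \<Rightarrow> nat \<Rightarrow> nat \<Rightarrow> complex" where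
  "mexp_term A c i j k = (A ^\<^sub>m k) $$ (i, j) * c ^ k / fact k"

lemma mexp_carrier: "A \<in> carrier_mat n n \<Longrightarrow> mexp (c \<cdot>\<^sub>m A) \<in> carrier_mat n n"
  by (simp add: mexp_def)

lemma index_mexp_smult:
  assumes A: "A \<in> carrier_mat n n" and "i < n" "j < n"
  shows "mexp (c \<cdot>\<^sub>m A) $$ (i, j) = (\<Sum>k. mexp_term A c i j k)"
  using assms by (simp add: mexp_def mexp_term_def pow_mat_smult[OF A] mult.commute)

lemma summable_real_exp_series: "summable (\<lambda>k. (x::real) ^ k / fact k)"
  using summable_exp[of x] by (simp add: divide_inverse mult.commute)

lemma real_exp_series: "(\<Sum>k. (x::real) ^ k / fact k) = exp x"
  using exp_converges[of x] by (simp add: sums_iff divide_inverse mult.commute scaleR_conv_of_real)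

lemma norm_mexp_term_le:
  assumes A: "A \<in> carrier_mat n n" and "i < n" "j < n"
  shows "cmod (mexp_term A c i j k) \<le> real n * ((cmod c * mat_l1_norm A) ^ k / fact k)"
proof -
  have "cmod ((A ^\<^sub>m k) $$ (i, j)) \<le> mat_l1_norm (A ^\<^sub>m k)"
    using assms by (intro norm_index_le_mat_l1_norm) auto
  also have "\<dots> \<le> real n * mat_l1_norm A ^ k"
    by (rule mat_l1_norm_pow[OF A])
  finally have "cmod (mexp_term A c i j k) \<le> real n * mat_l1_norm A ^ k * cmod c ^ k / fact k"
    by (simp add: mexp_term_def norm_mult norm_divide norm_power divide_right_mono mult_right_mono)
  then show ?thesis by (simp add: power_mult_distrib mult_ac)
qed

lemma summable_norm_mexp_term:
  assumes "A \<in> carrier_mat n n" "i < n" "j < n"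
  shows "summable (\<lambda>k. cmod (mexp_term A c i j k))"
  by (rule summable_comparison_test[OF _ summable_mult[OF summable_real_exp_series]])
     (use norm_mexp_term_le[OF assms] in auto)

lemma summable_mexp_term:
  assumes "A \<in> carrier_mat n n" "i < n" "j < n"
  shows "summable (\<lambda>k. mexp_term A c i j k)"
  by (rule summable_norm_cancel[OF summable_norm_mexp_term[OF assms]])

lemma mexp_smult_zero:
  assumes A: "A \<in> carrier_mat n n"
  shows "mexp (0 \<cdot>\<^sub>m A) = 1\<^sub>m n"
proof (rule eq_matI)
  fix i j assume "i < dim_row (1\<^sub>m n :: complex mat)" "j < dim_col (1\<^sub>m n :: complex mat)"
  then have i: "i < n" and j: "j < n" by auto
  have "mexp (0 \<cdot>\<^sub>m A) $$ (i, j) = (\<Sum>k\<in>{0}. mexp_term A 0 i j k)"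
    unfolding index_mexp_smult[OF A i j] by (rule suminf_finite) (auto simp: mexp_term_def)
  then show "mexp (0 \<cdot>\<^sub>m A) $$ (i, j) = 1\<^sub>m n $$ (i, j)"
    using A i j by (simp add: mexp_term_def)
qed (use A in \<open>auto simp: mexp_def\<close>)

lemma mexp_term_Cauchy_product:
  assumes A: "A \<in> carrier_mat n n" and i: "i < n" and j: "j < n"
  shows "(\<Sum>l<n. \<Sum>m\<le>k. mexp_term A s i l m * mexp_term A t l j (k - m)) = mexp_term A (s + t) i j k"
proof -
  have "(\<Sum>l<n. \<Sum>m\<le>k. mexp_term A s i l m * mexp_term A t l j (k - m))
      = (\<Sum>m\<le>k. (\<Sum>l<n. (A ^\<^sub>m m) $$ (i, l) * (A ^\<^sub>m (k - m)) $$ (l, j))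
                  * (s ^ m * t ^ (k - m) / (fact m * fact (k - m))))"
  proof -
    have "mexp_term A s i l m * mexp_term A t l j (k - m)
        = ((A ^\<^sub>m m) $$ (i, l) * (A ^\<^sub>m (k - m)) $$ (l, j)) * (s ^ m * t ^ (k - m) / (fact m * fact (k - m)))"
      for l m by (simp add: mexp_term_def)
    then show ?thesis by (subst sum.swap) (simp only: sum_distrib_right)
  qed
  also have "\<dots> = (\<Sum>m\<le>k. (A ^\<^sub>m k) $$ (i, j) * (s ^ m * t ^ (k - m) / (fact m * fact (k - m))))"
  proof (intro sum.cong refl)
    fix m assume "m \<in> {..k}"
    then have "A ^\<^sub>m m * A ^\<^sub>m (k - m) = A ^\<^sub>m k" by (simp add: pow_mat_add[OF A])
    moreover have "(A ^\<^sub>m m * A ^\<^sub>m (k - m)) $$ (i, j) = (\<Sum>l<n. (A ^\<^sub>m m) $$ (i, l) * (A ^\<^sub>m (k - m)) $$ (l, j))"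
      using A i j by (intro index_mult_mat_sum) auto
    ultimately show "(\<Sum>l<n. (A ^\<^sub>m m) $$ (i, l) * (A ^\<^sub>m (k - m)) $$ (l, j))
        * (s ^ m * t ^ (k - m) / (fact m * fact (k - m)))
      = (A ^\<^sub>m k) $$ (i, j) * (s ^ m * t ^ (k - m) / (fact m * fact (k - m)))" by simp
  qed
  also have "\<dots> = (A ^\<^sub>m k) $$ (i, j) * (\<Sum>m\<le>k. s ^ m * t ^ (k - m) / (fact m * fact (k - m)))"
    by (simp only: sum_distrib_left)
  also have "(\<Sum>m\<le>k. s ^ m * t ^ (k - m) / (fact m * fact (k - m))) = (s + t) ^ k / fact k"
    by (simp add: binomial_ring binomial_fact sum_divide_distrib field_simps)
  finally show ?thesis by (simp add: mexp_term_def)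
qed

lemma mexp_smult_add:
  assumes A: "A \<in> carrier_mat n n"
  shows "mexp (s \<cdot>\<^sub>m A) * mexp (t \<cdot>\<^sub>m A) = mexp ((s + t) \<cdot>\<^sub>m A)"
proof (rule eq_matI)
  fix i j assume "i < dim_row (mexp ((s + t) \<cdot>\<^sub>m A))" "j < dim_col (mexp ((s + t) \<cdot>\<^sub>m A))"
  then have i: "i < n" and j: "j < n" using A by (auto simp: mexp_def)
  have "(mexp (s \<cdot>\<^sub>m A) * mexp (t \<cdot>\<^sub>m A)) $$ (i, j)
      = (\<Sum>l<n. (\<Sum>k. mexp_term A s i l k) * (\<Sum>k. mexp_term A t l j k))"
    using A i j by (simp add: index_mult_mat_sum[OF mexp_carrier mexp_carrier] index_mexp_smult)
  also have "\<dots> = (\<Sum>l<n. \<Sum>k. \<Sum>m\<le>k. mexp_term A s i l m * mexp_term A t l j (k - m))"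
    by (intro sum.cong refl Cauchy_product summable_norm_mexp_term[OF A]) (use i j in auto)
  also have "\<dots> = (\<Sum>k. \<Sum>l<n. \<Sum>m\<le>k. mexp_term A s i l m * mexp_term A t l j (k - m))"
    by (rule suminf_sum[symmetric], rule summable_Cauchy_product,
        (rule summable_norm_mexp_term[OF A]; use i j in auto)+)
  also have "\<dots> = mexp ((s + t) \<cdot>\<^sub>m A) $$ (i, j)"
    by (simp add: mexp_term_Cauchy_product[OF A i j] index_mexp_smult[OF A i j])
  finally show "(mexp (s \<cdot>\<^sub>m A) * mexp (t \<cdot>\<^sub>m A)) $$ (i, j) = mexp ((s + t) \<cdot>\<^sub>m A) $$ (i, j)" .
qed (use A in \<open>auto simp: mexp_def\<close>)

lemma hermitian_mat_carrier: "hermitian_mat n A \<Longrightarrow> A \<in> carrier_mat n n"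
  by (simp add: hermitian_mat_def)

lemma cnj_index_hermitian_mat:
  "hermitian_mat n A \<Longrightarrow> i < n \<Longrightarrow> j < n \<Longrightarrow> cnj (A $$ (j, i)) = A $$ (i, j)"
  unfolding hermitian_mat_def by (metis index_mat_adjoint carrier_matD(1,2))

lemma hermitian_mat_pow:
  assumes H: "hermitian_mat n A"
  shows "hermitian_mat n (A ^\<^sub>m k)"
proof (induction k)
  case 0
  then show ?case using H by (auto simp: hermitian_mat_def intro!: eq_matI)
next
  case (Suc k)
  have A: "A \<in> carrier_mat n n" by (rule hermitian_mat_carrier[OF H])
  have "cnj ((A ^\<^sub>m Suc k) $$ (j, i)) = (A ^\<^sub>m Suc k) $$ (i, j)" if "i < n" "j < n" for i j
  proof -
    have "cnj ((A ^\<^sub>m Suc k) $$ (j, i)) = (\<Sum>l<n. A $$ (i, l) * (A ^\<^sub>m k) $$ (l, j))"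
      using that A cnj_index_hermitian_mat[OF H] cnj_index_hermitian_mat[OF Suc]
      by (simp only: pow_mat.simps, subst index_mult_mat_sum[of _ n n _ n])
         (auto simp: cnj_sum mult.commute intro!: sum.cong)
    also have "\<dots> = (A * A ^\<^sub>m k) $$ (i, j)"
      by (rule index_mult_mat_sum[of _ n n _ n, symmetric]) (use that A in auto)
    also have "A * A ^\<^sub>m k = A ^\<^sub>m Suc k"
      using pow_mat_add[OF A, of 1 k] A by simp
    finally show ?thesis .
  qed
  then show ?case using A by (auto simp: hermitian_mat_def intro!: eq_matI)
qed

lemma mat_adjoint_mexp_smult:
  assumes H: "hermitian_mat n A"
  shows "mat_adjoint (mexp (c \<cdot>\<^sub>m A)) = mexp (cnj c \<cdot>\<^sub>m A)"
proof (rule eq_matI)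
  have A: "A \<in> carrier_mat n n" by (rule hermitian_mat_carrier[OF H])
  fix i j assume "i < dim_row (mexp (cnj c \<cdot>\<^sub>m A))" "j < dim_col (mexp (cnj c \<cdot>\<^sub>m A))"
  then have i: "i < n" and j: "j < n" using A by (auto simp: mexp_def)
  have "mat_adjoint (mexp (c \<cdot>\<^sub>m A)) $$ (i, j) = cnj (\<Sum>k. mexp_term A c j i k)"
    using A i j by (simp add: mexp_def index_mexp_smult[OF A j i, symmetric])
  also have "\<dots> = (\<Sum>k. cnj (mexp_term A c j i k))"
    by (metis sums_cnj sums_unique summable_sums summable_mexp_term[OF A j i])
  also have "\<dots> = (\<Sum>k. mexp_term A (cnj c) i j k)"
    using cnj_index_hermitian_mat[OF hermitian_mat_pow[OF H] i j] by (simp add: mexp_term_def)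
  finally show "mat_adjoint (mexp (c \<cdot>\<^sub>m A)) $$ (i, j) = mexp (cnj c \<cdot>\<^sub>m A) $$ (i, j)"
    by (simp add: index_mexp_smult[OF A i j])
qed (use hermitian_mat_carrier[OF H] in \<open>auto simp: mexp_def\<close>)

lemma evol_carrier: "A \<in> carrier_mat n n \<Longrightarrow> evol A t \<in> carrier_mat n n"
  unfolding evol_def by (rule mexp_carrier)

lemma evol_add:
  assumes "A \<in> carrier_mat n n"
  shows "evol A s * evol A t = evol A (s + t)"
  unfolding evol_def by (simp add: mexp_smult_add[OF assms] algebra_simps)

lemma evol_zero:
  assumes "A \<in> carrier_mat n n"
  shows "evol A 0 = 1\<^sub>m n"
  unfolding evol_def using mexp_smult_zero[OF assms] by simp

lemma evol_unitary:
  assumes H: "hermitian_mat n A"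
  shows "unitary_mat n (evol A t)"
proof -
  have A: "A \<in> carrier_mat n n" by (rule hermitian_mat_carrier[OF H])
  let ?c = "- \<i> * complex_of_real t"
  have "mat_adjoint (evol A t) * evol A t = mexp ((cnj ?c + ?c) \<cdot>\<^sub>m A)"
    unfolding evol_def by (simp only: mat_adjoint_mexp_smult[OF H] mexp_smult_add[OF A])
  also have "cnj ?c + ?c = 0" by simp
  finally show ?thesis
    using evol_carrier[OF A] mexp_smult_zero[OF A] by (simp add: unitary_mat_def)
qed

lemma norm_mexp_term_tail_le:
  assumes A: "A \<in> carrier_mat n n" and c: "cmod c \<le> 1" and i: "i < n" and j: "j < n"
  shows "cmod ((\<Sum>k. mexp_term A c i j k) - mexp_term A c i j 0 - mexp_term A c i j 1)
    \<le> (cmod c)\<^sup>2 * (real n * exp (mat_l1_norm A))"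
proof -
  let ?a = "mat_l1_norm A"
  let ?f = "mexp_term A c i j"
  let ?g = "\<lambda>k. (cmod c)\<^sup>2 * (real n * (?a ^ (k + 2) / fact (k + 2)))"
  have exp_tail: "summable (\<lambda>k. ?a ^ (k + 2) / fact (k + 2))"
    by (rule summable_real_exp_series[THEN summable_iff_shift[where k = 2, THEN iffD2]])
  have f_tail: "summable (\<lambda>k. cmod (?f (k + 2)))"
    by (rule summable_iff_shift[THEN iffD2, OF summable_norm_mexp_term[OF A i j]])
  have "(\<Sum>k. ?f k) = (\<Sum>k. ?f (k + 2)) + ?f 0 + ?f 1"
    using suminf_split_initial_segment[OF summable_mexp_term[OF A i j], where k = 2]
    by (simp add: eval_nat_numeral)
  then have "cmod ((\<Sum>k. ?f k) - ?f 0 - ?f 1) \<le> (\<Sum>k. cmod (?f (k + 2)))"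
    using summable_norm[OF f_tail] by simp
  also have "\<dots> \<le> (\<Sum>k. ?g k)"
  proof (rule suminf_le[OF _ f_tail summable_mult[OF summable_mult[OF exp_tail]]])
    fix k
    have "cmod (?f (k + 2)) \<le> real n * ((cmod c * ?a) ^ (k + 2) / fact (k + 2))"
      by (rule norm_mexp_term_le[OF A i j])
    also have "\<dots> = cmod c ^ (k + 2) * (real n * (?a ^ (k + 2) / fact (k + 2)))"
      by (simp add: power_mult_distrib)
    also have "\<dots> \<le> ?g k"
      using c mat_l1_norm_nonneg[of A]
      by (intro mult_right_mono power_decreasing) auto
    finally show "cmod (?f (k + 2)) \<le> ?g k" .
  qed
  also have "\<dots> = (cmod c)\<^sup>2 * (real n * (\<Sum>k. ?a ^ (k + 2) / fact (k + 2)))"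
    by (simp only: suminf_mult[OF exp_tail] suminf_mult[OF summable_mult[OF exp_tail]])
  also have "(\<Sum>k. ?a ^ (k + 2) / fact (k + 2)) \<le> exp ?a"
    using suminf_split_initial_segment[OF summable_real_exp_series[of ?a], where k = 2] mat_l1_norm_nonneg[of A]
    by (simp add: real_exp_series eval_nat_numeral)
  finally show ?thesis by (simp add: mult_left_mono)
qed

lemma mexp_smult_remainder:
  assumes A: "A \<in> carrier_mat n n" and c: "cmod c \<le> 1"
  shows "mat_l1_norm (mexp (c \<cdot>\<^sub>m A) - 1\<^sub>m n - c \<cdot>\<^sub>m A)
    \<le> (cmod c)\<^sup>2 * (real n ^ 3 * exp (mat_l1_norm A))"
proof -
  have "mat_l1_norm (mexp (c \<cdot>\<^sub>m A) - 1\<^sub>m n - c \<cdot>\<^sub>m A)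
      \<le> real n * real n * ((cmod c)\<^sup>2 * (real n * exp (mat_l1_norm A)))"
  proof (rule mat_l1_norm_le_entrywise)
    show "mexp (c \<cdot>\<^sub>m A) - 1\<^sub>m n - c \<cdot>\<^sub>m A \<in> carrier_mat n n"
      using A by (intro minus_carrier_mat) auto
    fix i j assume i: "i < n" and j: "j < n"
    have "(mexp (c \<cdot>\<^sub>m A) - 1\<^sub>m n - c \<cdot>\<^sub>m A) $$ (i, j)
        = (\<Sum>k. mexp_term A c i j k) - mexp_term A c i j 0 - mexp_term A c i j 1"
      using A mexp_carrier[OF A] i j by (simp add: index_mexp_smult[OF A i j] mexp_term_def)
    then show "cmod ((mexp (c \<cdot>\<^sub>m A) - 1\<^sub>m n - c \<cdot>\<^sub>m A) $$ (i, j))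
        \<le> (cmod c)\<^sup>2 * (real n * exp (mat_l1_norm A))"
      using norm_mexp_term_tail_le[OF A c i j] by simp
  qed
  then show ?thesis by (simp add: power3_eq_cube mult_ac)
qed

section \<open>First-order expansions at zero\<close>

definition first_order_expansion :: "nat \<Rightarrow> (real \<Rightarrow> complex mat) \<Rightarrow> complex mat \<Rightarrow> bool" where
  "first_order_expansion n X A \<longleftrightarrow> A \<in> carrier_mat n n \<and> (\<forall>t. X t \<in> carrier_mat n n) \<and>
     (\<exists>C. \<forall>t. 0 < t \<and> t \<le> 1 \<longrightarrow> mat_l1_norm (X t - 1\<^sub>m n - complex_of_real t \<cdot>\<^sub>m A) \<le> C * t\<^sup>2)"

lemma first_order_expansionI:
  assumes "A \<in> carrier_mat n n" "\<And>t. X t \<in> carrier_mat n n"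
    and "\<And>t. 0 < t \<Longrightarrow> t \<le> 1 \<Longrightarrow> mat_l1_norm (X t - 1\<^sub>m n - complex_of_real t \<cdot>\<^sub>m A) \<le> C * t\<^sup>2"
  shows "first_order_expansion n X A"
  using assms unfolding first_order_expansion_def by blast

lemma first_order_expansionD:
  assumes "first_order_expansion n X A"
  shows "A \<in> carrier_mat n n" "X t \<in> carrier_mat n n"
  using assms by (auto simp: first_order_expansion_def)

lemma first_order_expansionE:
  assumes "first_order_expansion n X A"
  obtains C where "C \<ge> 0"
    "\<And>t. 0 < t \<Longrightarrow> t \<le> 1 \<Longrightarrow> mat_l1_norm (X t - 1\<^sub>m n - complex_of_real t \<cdot>\<^sub>m A) \<le> C * t\<^sup>2"
proof -
  obtain C where C: "\<And>t. 0 < t \<Longrightarrow> t \<le> 1 \<Longrightarrow> mat_l1_norm (X t - 1\<^sub>m n - complex_of_real t \<cdot>\<^sub>m A) \<le> C * t\<^sup>2"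
    using assms unfolding first_order_expansion_def by blast
  have "C \<ge> 0"
    using C[of 1] mat_l1_norm_nonneg[of "X 1 - 1\<^sub>m n - complex_of_real 1 \<cdot>\<^sub>m A"] by simp
  with C show ?thesis using that by blast
qed

lemma first_order_expansion_one: "first_order_expansion n (\<lambda>t. 1\<^sub>m n) (0\<^sub>m n n)"
  by (rule first_order_expansionI[where C = 0]) (auto simp: mat_l1_norm_def)

lemma first_order_expansion_evol:
  assumes H: "H \<in> carrier_mat n n" and r: "0 \<le> r" "r \<le> 1"
  shows "first_order_expansion n (\<lambda>t. evol H (r * t)) ((- \<i> * complex_of_real r) \<cdot>\<^sub>m H)"
proof (rule first_order_expansionI[where C = "real n ^ 3 * exp (mat_l1_norm H)"])
  let ?K = "real n ^ 3 * exp (mat_l1_norm H)"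
  fix t :: real assume t: "0 < t" "t \<le> 1"
  let ?c = "- \<i> * complex_of_real (r * t)"
  have c: "complex_of_real t \<cdot>\<^sub>m ((- \<i> * complex_of_real r) \<cdot>\<^sub>m H) = ?c \<cdot>\<^sub>m H"
    by (auto intro!: eq_matI simp: algebra_simps)
  have norm_c: "cmod ?c = r * t"
    using t r by (simp add: norm_mult)
  have "mat_l1_norm (mexp (?c \<cdot>\<^sub>m H) - 1\<^sub>m n - ?c \<cdot>\<^sub>m H) \<le> (r * t)\<^sup>2 * ?K"
    using mexp_smult_remainder[OF H, of ?c] norm_c r t by (simp add: mult_le_one)
  also have "\<dots> = r\<^sup>2 * (?K * t\<^sup>2)"
    by (simp add: power_mult_distrib mult_ac)
  also have "\<dots> \<le> ?K * t\<^sup>2"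
    using r by (intro mult_left_le_one_le) (auto simp: power_le_one)
  finally show "mat_l1_norm (evol H (r * t) - 1\<^sub>m n - complex_of_real t \<cdot>\<^sub>m ((- \<i> * complex_of_real r) \<cdot>\<^sub>m H))
      \<le> ?K * t\<^sup>2"
    by (simp only: c evol_def)
qed (use H evol_carrier[OF H] in auto)

lemma first_order_expansion_bounded:
  assumes X: "first_order_expansion n X A"
  obtains M where "\<And>t. 0 < t \<Longrightarrow> t \<le> 1 \<Longrightarrow> mat_l1_norm (X t) \<le> M"
proof -
  obtain C where C: "C \<ge> 0"
    "\<And>t. 0 < t \<Longrightarrow> t \<le> 1 \<Longrightarrow> mat_l1_norm (X t - 1\<^sub>m n - complex_of_real t \<cdot>\<^sub>m A) \<le> C * t\<^sup>2"
    using first_order_expansionE[OF X] by blast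
  have A: "A \<in> carrier_mat n n" and Xc: "X t \<in> carrier_mat n n" for t
    using first_order_expansionD[OF X] by auto
  have "mat_l1_norm (X t) \<le> C + real n + mat_l1_norm A" if t: "0 < t" "t \<le> 1" for t
  proof -
    let ?E = "X t - 1\<^sub>m n - complex_of_real t \<cdot>\<^sub>m A"
    have E: "?E \<in> carrier_mat n n" using A Xc by (intro minus_carrier_mat) auto
    have X_eq: "X t = ?E + 1\<^sub>m n + complex_of_real t \<cdot>\<^sub>m A"
      using A Xc[of t] by (intro eq_matI) auto
    have "mat_l1_norm (?E + 1\<^sub>m n + complex_of_real t \<cdot>\<^sub>m A)
        \<le> mat_l1_norm (?E + 1\<^sub>m n) + mat_l1_norm (complex_of_real t \<cdot>\<^sub>m A)"
      by (rule mat_l1_norm_add[of _ n n]) (use A E in auto)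
    then have "mat_l1_norm (X t) \<le> mat_l1_norm (?E + 1\<^sub>m n) + mat_l1_norm (complex_of_real t \<cdot>\<^sub>m A)"
      unfolding X_eq[symmetric] .
    also have "\<dots> \<le> mat_l1_norm ?E + real n + t * mat_l1_norm A"
      using mat_l1_norm_add[OF E one_carrier_mat] t by (simp add: mat_l1_norm_one mat_l1_norm_smult)
    also have "\<dots> \<le> C + real n + mat_l1_norm A"
    proof -
      have "mat_l1_norm ?E \<le> C * t\<^sup>2" by (rule C(2)[OF t])
      also have "\<dots> \<le> C" using C(1) t by (simp add: mult_left_le power_le_one)
      finally show ?thesis
        using t mat_l1_norm_nonneg[of A] by (simp add: mult_left_le_one_le add_mono)
    qed
    finally show ?thesis by simp
  qed
  then show ?thesis using that by blast
qed

lemma mult_remainder_eq: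
  fixes A B X Y :: "complex mat"
  assumes A: "A \<in> carrier_mat n n" and B: "B \<in> carrier_mat n n"
    and X: "X \<in> carrier_mat n n" and Y: "Y \<in> carrier_mat n n"
  shows "X * Y - 1\<^sub>m n - c \<cdot>\<^sub>m (A + B)
    = (X - 1\<^sub>m n - c \<cdot>\<^sub>m A) * Y + (Y - 1\<^sub>m n - c \<cdot>\<^sub>m B)
      + c \<cdot>\<^sub>m (A * (Y - 1\<^sub>m n - c \<cdot>\<^sub>m B)) + (c * c) \<cdot>\<^sub>m (A * B)"
proof -
  have "(X - 1\<^sub>m n - c \<cdot>\<^sub>m A) * Y = (X - 1\<^sub>m n) * Y - (c \<cdot>\<^sub>m A) * Y"
    by (rule minus_mult_distrib_mat[of _ n n _ _ n]) (use A X Y in auto)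
  also have "(X - 1\<^sub>m n) * Y = X * Y - 1\<^sub>m n * Y"
    by (rule minus_mult_distrib_mat[of _ n n _ _ n]) (use X Y in auto)
  also have "(c \<cdot>\<^sub>m A) * Y = c \<cdot>\<^sub>m (A * Y)"
    by (rule mult_smult_assoc_mat[OF A Y])
  finally have e1: "(X - 1\<^sub>m n - c \<cdot>\<^sub>m A) * Y = X * Y - Y - c \<cdot>\<^sub>m (A * Y)"
    using Y by simp
  have "A * (Y - 1\<^sub>m n - c \<cdot>\<^sub>m B) = A * (Y - 1\<^sub>m n) - A * (c \<cdot>\<^sub>m B)"
    by (rule mult_minus_distrib_mat[of _ n n _ n]) (use A B Y in auto)
  also have "A * (Y - 1\<^sub>m n) = A * Y - A * 1\<^sub>m n"
    by (rule mult_minus_distrib_mat[of _ n n _ n]) (use A Y in auto)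
  also have "A * (c \<cdot>\<^sub>m B) = c \<cdot>\<^sub>m (A * B)"
    by (rule mult_smult_distrib[OF A B])
  finally have e2: "A * (Y - 1\<^sub>m n - c \<cdot>\<^sub>m B) = A * Y - A - c \<cdot>\<^sub>m (A * B)"
    using A by simp
  have "A * Y \<in> carrier_mat n n" "A * B \<in> carrier_mat n n" "X * Y \<in> carrier_mat n n"
    using A B X Y by auto
  then show ?thesis
    unfolding e1 e2 using A B X Y by (intro eq_matI) (simp_all add: algebra_simps)
qed

lemma first_order_expansion_mult:
  assumes X: "first_order_expansion n X A" and Y: "first_order_expansion n Y B"
  shows "first_order_expansion n (\<lambda>t. X t * Y t) (A + B)"
proof -
  obtain C1 where C1: "C1 \<ge> 0"
    "\<And>t. 0 < t \<Longrightarrow> t \<le> 1 \<Longrightarrow> mat_l1_norm (X t - 1\<^sub>m n - complex_of_real t \<cdot>\<^sub>m A) \<le> C1 * t\<^sup>2"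
    using first_order_expansionE[OF X] by blast
  obtain C2 where C2:
    "\<And>t. 0 < t \<Longrightarrow> t \<le> 1 \<Longrightarrow> mat_l1_norm (Y t - 1\<^sub>m n - complex_of_real t \<cdot>\<^sub>m B) \<le> C2 * t\<^sup>2"
    using first_order_expansionE[OF Y] by blast
  obtain M where M: "\<And>t. 0 < t \<Longrightarrow> t \<le> 1 \<Longrightarrow> mat_l1_norm (Y t) \<le> M"
    using first_order_expansion_bounded[OF Y] by blast
  have A: "A \<in> carrier_mat n n" and B: "B \<in> carrier_mat n n"
    and Xc: "X t \<in> carrier_mat n n" and Yc: "Y t \<in> carrier_mat n n" for t
    using first_order_expansionD X Y by blast+
  let ?a = "mat_l1_norm A"
  show ?thesis
  proof (rule first_order_expansionI[where C = "C1 * M + (1 + ?a) * C2 + ?a * mat_l1_norm B"])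
    fix t :: real assume t: "0 < t" "t \<le> 1"
    let ?t = "complex_of_real t"
    define E1 where "E1 = X t - 1\<^sub>m n - ?t \<cdot>\<^sub>m A"
    define E2 where "E2 = Y t - 1\<^sub>m n - ?t \<cdot>\<^sub>m B"
    have E1c: "E1 \<in> carrier_mat n n" and E2c: "E2 \<in> carrier_mat n n"
      unfolding E1_def E2_def using A B Xc Yc by (auto intro!: minus_carrier_mat)
    have E1: "mat_l1_norm E1 \<le> C1 * t\<^sup>2" and E2: "mat_l1_norm E2 \<le> C2 * t\<^sup>2"
      unfolding E1_def E2_def using C1(2) C2 t by blast+
    have "mat_l1_norm (E1 * Y t + E2 + ?t \<cdot>\<^sub>m (A * E2) + (?t * ?t) \<cdot>\<^sub>m (A * B))
        \<le> mat_l1_norm (E1 * Y t) + mat_l1_norm E2 + mat_l1_norm (?t \<cdot>\<^sub>m (A * E2))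
           + mat_l1_norm ((?t * ?t) \<cdot>\<^sub>m (A * B))"
      using E1c E2c A B Yc[of t] by (intro mat_l1_norm_add4[of _ n n]) auto
    also have "\<dots> \<le> C1 * t\<^sup>2 * M + C2 * t\<^sup>2 + ?a * (C2 * t\<^sup>2) + t\<^sup>2 * (?a * mat_l1_norm B)"
    proof -
      have "mat_l1_norm (E1 * Y t) \<le> C1 * t\<^sup>2 * M"
        using mat_l1_norm_mult[OF E1c Yc] mult_mono[OF E1 M[OF t]] mat_l1_norm_nonneg C1(1)
        by (meson order_trans zero_le_power2 mult_nonneg_nonneg)
      moreover have "mat_l1_norm (?t \<cdot>\<^sub>m (A * E2)) \<le> ?a * (C2 * t\<^sup>2)"
      proof -
        have "mat_l1_norm (?t \<cdot>\<^sub>m (A * E2)) = t * mat_l1_norm (A * E2)"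
          using t by (simp add: mat_l1_norm_smult)
        also have "\<dots> \<le> 1 * (?a * mat_l1_norm E2)"
          using t mat_l1_norm_mult[OF A E2c] mat_l1_norm_nonneg[of "A * E2"] by (intro mult_mono) auto
        also have "\<dots> \<le> ?a * (C2 * t\<^sup>2)"
          using E2 mat_l1_norm_nonneg[of A] by (simp add: mult_left_mono)
        finally show ?thesis .
      qed
      moreover have "mat_l1_norm ((?t * ?t) \<cdot>\<^sub>m (A * B)) \<le> t\<^sup>2 * (?a * mat_l1_norm B)"
        using mat_l1_norm_mult[OF A B]
        by (simp add: mat_l1_norm_smult norm_mult power2_eq_square mult_left_mono)
      ultimately show ?thesis using E2 by linarith
    qed
    also have "\<dots> = (C1 * M + (1 + ?a) * C2 + ?a * mat_l1_norm B) * t\<^sup>2"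
      by (simp add: algebra_simps)
    finally show "mat_l1_norm (X t * Y t - 1\<^sub>m n - ?t \<cdot>\<^sub>m (A + B))
        \<le> (C1 * M + (1 + ?a) * C2 + ?a * mat_l1_norm B) * t\<^sup>2"
      unfolding mult_remainder_eq[OF A B Xc Yc] E1_def[symmetric] E2_def[symmetric] .
  qed (use A B Xc Yc in \<open>auto intro: mult_carrier_mat\<close>)
qed

lemma conj_remainder_eq:
  fixes P Q X A :: "complex mat"
  assumes P: "P \<in> carrier_mat n n" and Q: "Q \<in> carrier_mat n n" and PQ: "P * Q = 1\<^sub>m n"
    and X: "X \<in> carrier_mat n n" and A: "A \<in> carrier_mat n n"
  shows "P * (X - 1\<^sub>m n - c \<cdot>\<^sub>m A) * Q = P * X * Q - 1\<^sub>m n - c \<cdot>\<^sub>m (P * A * Q)"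
proof -
  have "P * (X - 1\<^sub>m n - c \<cdot>\<^sub>m A) = P * (X - 1\<^sub>m n) - P * (c \<cdot>\<^sub>m A)"
    by (rule mult_minus_distrib_mat[of _ n n _ n]) (use A X P in auto)
  also have "P * (X - 1\<^sub>m n) = P * X - P * 1\<^sub>m n"
    by (rule mult_minus_distrib_mat[of _ n n _ n]) (use X P in auto)
  also have "P * (c \<cdot>\<^sub>m A) = c \<cdot>\<^sub>m (P * A)"
    by (rule mult_smult_distrib[OF P A])
  finally have PE: "P * (X - 1\<^sub>m n - c \<cdot>\<^sub>m A) = P * X - P - c \<cdot>\<^sub>m (P * A)"
    using P by simp
  have PX: "P * X \<in> carrier_mat n n" "P * A \<in> carrier_mat n n"
    using P A X by auto
  have "P * (X - 1\<^sub>m n - c \<cdot>\<^sub>m A) * Q = (P * X - P) * Q - (c \<cdot>\<^sub>m (P * A)) * Q"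
    unfolding PE by (rule minus_mult_distrib_mat[OF minus_carrier_mat[OF P] smult_carrier_mat[OF PX(2)] Q])
  also have "(P * X - P) * Q = P * X * Q - P * Q"
    by (rule minus_mult_distrib_mat[OF PX(1) P Q])
  also have "(c \<cdot>\<^sub>m (P * A)) * Q = c \<cdot>\<^sub>m (P * A * Q)"
    by (rule mult_smult_assoc_mat[OF PX(2) Q])
  finally show ?thesis by (simp only: PQ)
qed

lemma first_order_expansion_conj:
  assumes X: "first_order_expansion n X A"
    and P: "P \<in> carrier_mat n n" and Q: "Q \<in> carrier_mat n n" and PQ: "P * Q = 1\<^sub>m n"
  shows "first_order_expansion n (\<lambda>t. P * X t * Q) (P * A * Q)"
proof -
  obtain C where C:
    "\<And>t. 0 < t \<Longrightarrow> t \<le> 1 \<Longrightarrow> mat_l1_norm (X t - 1\<^sub>m n - complex_of_real t \<cdot>\<^sub>m A) \<le> C * t\<^sup>2"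
    using first_order_expansionE[OF X] by blast
  have A: "A \<in> carrier_mat n n" and Xc: "X t \<in> carrier_mat n n" for t
    using first_order_expansionD[OF X] by auto
  show ?thesis
  proof (rule first_order_expansionI[where C = "mat_l1_norm P * C * mat_l1_norm Q"])
    fix t :: real assume t: "0 < t" "t \<le> 1"
    let ?E = "X t - 1\<^sub>m n - complex_of_real t \<cdot>\<^sub>m A"
    have E: "?E \<in> carrier_mat n n" using A Xc by (intro minus_carrier_mat) auto
    have "mat_l1_norm (P * ?E * Q) \<le> mat_l1_norm P * mat_l1_norm ?E * mat_l1_norm Q"
      using P Q E mat_l1_norm_mult[of P n n ?E] mat_l1_norm_mult[of "P * ?E" n n Q] mat_l1_norm_nonneg
      by (meson mult_carrier_mat mult_right_mono order_trans)
    also have "\<dots> \<le> mat_l1_norm P * (C * t\<^sup>2) * mat_l1_norm Q"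
      using C[OF t] by (intro mult_right_mono mult_left_mono mat_l1_norm_nonneg)
    finally show "mat_l1_norm (P * X t * Q - 1\<^sub>m n - complex_of_real t \<cdot>\<^sub>m (P * A * Q))
        \<le> mat_l1_norm P * C * mat_l1_norm Q * t\<^sup>2"
      by (simp add: conj_remainder_eq[OF P Q PQ Xc A, symmetric] mult_ac)
  qed (use A Xc P Q in \<open>auto intro: mult_carrier_mat\<close>)
qed

lemma first_order_expansion_conjugates:
  assumes E: "first_order_expansion n E G" and X: "first_order_expansion n X A"
    and Zs: "\<And>Z. Z \<in> set Zs \<Longrightarrow> Z \<in> carrier_mat n n \<and> Z * Z = 1\<^sub>m n"
  shows "first_order_expansion n (\<lambda>t. foldl (\<lambda>M Z. Z * E t * Z * M) (X t) Zs)
    (foldl (\<lambda>B Z. Z * G * Z + B) A Zs)"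
  using X Zs
proof (induction Zs arbitrary: X A)
  case (Cons Z Zs)
  have "first_order_expansion n (\<lambda>t. Z * E t * Z * X t) (Z * G * Z + A)"
    using Cons.prems by (intro first_order_expansion_mult first_order_expansion_conj[OF E]) auto
  then show ?case using Cons by simp
qed simp

lemma intertwining_remainder_eq:
  fixes T J E AT AE :: "complex mat"
  assumes T: "T \<in> carrier_mat N N" and AT: "AT \<in> carrier_mat N N" and J: "J \<in> carrier_mat N d"
    and E: "E \<in> carrier_mat d d" and AE: "AE \<in> carrier_mat d d" and intertwine: "AT * J = J * AE"
  shows "T * J - J * E = (T - 1\<^sub>m N - c \<cdot>\<^sub>m AT) * J - J * (E - 1\<^sub>m d - c \<cdot>\<^sub>m AE)"
proof -
  have "(T - 1\<^sub>m N - c \<cdot>\<^sub>m AT) * J = (T - 1\<^sub>m N) * J - (c \<cdot>\<^sub>m AT) * J"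
    by (rule minus_mult_distrib_mat[of _ N N _ _ d]) (use AT T J in auto)
  also have "(T - 1\<^sub>m N) * J = T * J - 1\<^sub>m N * J"
    by (rule minus_mult_distrib_mat[of _ N N _ _ d]) (use T J in auto)
  also have "(c \<cdot>\<^sub>m AT) * J = c \<cdot>\<^sub>m (J * AE)"
    by (simp add: mult_smult_assoc_mat[OF AT J] intertwine)
  finally have R1: "(T - 1\<^sub>m N - c \<cdot>\<^sub>m AT) * J = T * J - J - c \<cdot>\<^sub>m (J * AE)"
    using J by simp
  have "J * (E - 1\<^sub>m d - c \<cdot>\<^sub>m AE) = J * (E - 1\<^sub>m d) - J * (c \<cdot>\<^sub>m AE)"
    by (rule mult_minus_distrib_mat[of _ N d _ d]) (use AE E J in auto)
  also have "J * (E - 1\<^sub>m d) = J * E - J * 1\<^sub>m d"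
    by (rule mult_minus_distrib_mat[of _ N d _ d]) (use E J in auto)
  also have "J * (c \<cdot>\<^sub>m AE) = c \<cdot>\<^sub>m (J * AE)"
    by (rule mult_smult_distrib[OF J AE])
  finally have R2: "J * (E - 1\<^sub>m d - c \<cdot>\<^sub>m AE) = J * E - J - c \<cdot>\<^sub>m (J * AE)"
    using J by simp
  have c: "T * J \<in> carrier_mat N d" "J * E \<in> carrier_mat N d" "J * AE \<in> carrier_mat N d"
    using T J E AE by auto
  show ?thesis
    unfolding R1 R2 using carrier_matD[OF c(1)] carrier_matD[OF c(2)] carrier_matD[OF c(3)] carrier_matD[OF J]
    by (intro eq_matI) simp_all
qed

lemma first_order_expansion_intertwining_mat:
  assumes T: "first_order_expansion N T AT" and E: "first_order_expansion d E AE"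
    and J: "J \<in> carrier_mat N d" and intertwine: "AT * J = J * AE"
  obtains K where "\<And>t. 0 < t \<Longrightarrow> t \<le> 1 \<Longrightarrow> mat_l1_norm (T t * J - J * E t) \<le> K * t\<^sup>2"
proof -
  obtain C1 where C1:
    "\<And>t. 0 < t \<Longrightarrow> t \<le> 1 \<Longrightarrow> mat_l1_norm (T t - 1\<^sub>m N - complex_of_real t \<cdot>\<^sub>m AT) \<le> C1 * t\<^sup>2"
    using first_order_expansionE[OF T] by blast
  obtain C2 where C2:
    "\<And>t. 0 < t \<Longrightarrow> t \<le> 1 \<Longrightarrow> mat_l1_norm (E t - 1\<^sub>m d - complex_of_real t \<cdot>\<^sub>m AE) \<le> C2 * t\<^sup>2"
    using first_order_expansionE[OF E] by blast
  have AT: "AT \<in> carrier_mat N N" and Tc: "T t \<in> carrier_mat N N"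
    and AE: "AE \<in> carrier_mat d d" and Ec: "E t \<in> carrier_mat d d" for t
    using first_order_expansionD T E by blast+
  have "mat_l1_norm (T t * J - J * E t) \<le> (C1 * mat_l1_norm J + mat_l1_norm J * C2) * t\<^sup>2"
    if t: "0 < t" "t \<le> 1" for t
  proof -
    let ?t = "complex_of_real t"
    define R1 where "R1 = T t - 1\<^sub>m N - ?t \<cdot>\<^sub>m AT"
    define R2 where "R2 = E t - 1\<^sub>m d - ?t \<cdot>\<^sub>m AE"
    have R1c: "R1 \<in> carrier_mat N N" and R2c: "R2 \<in> carrier_mat d d"
      unfolding R1_def R2_def using AT AE Tc Ec by (auto intro!: minus_carrier_mat)
    have "T t * J - J * E t = R1 * J - J * R2"
      unfolding R1_def R2_def by (rule intertwining_remainder_eq[OF Tc AT J Ec AE intertwine])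
    then have "mat_l1_norm (T t * J - J * E t) \<le> mat_l1_norm (R1 * J) + mat_l1_norm (J * R2)"
      by (simp only:) (rule mat_l1_norm_diff, use R1c R2c J in auto)
    also have "\<dots> \<le> mat_l1_norm R1 * mat_l1_norm J + mat_l1_norm J * mat_l1_norm R2"
      by (intro add_mono mat_l1_norm_mult[OF R1c J] mat_l1_norm_mult[OF J R2c])
    also have "\<dots> \<le> C1 * t\<^sup>2 * mat_l1_norm J + mat_l1_norm J * (C2 * t\<^sup>2)"
      using C1[OF t] C2[OF t] unfolding R1_def[symmetric] R2_def[symmetric]
      by (intro add_mono mult_right_mono mult_left_mono mat_l1_norm_nonneg)
    finally show ?thesis by (simp add: algebra_simps)
  qed
  then show ?thesis using that by blast
qed

lemma first_order_expansion_intertwining: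
  assumes T: "first_order_expansion N T AT" and E: "first_order_expansion d E AE"
    and J: "J \<in> carrier_mat N d" and intertwine: "AT * J = J * AE"
  obtains C where "\<And>t \<phi>. 0 < t \<Longrightarrow> t \<le> 1 \<Longrightarrow> \<phi> \<in> carrier_vec d \<Longrightarrow>
    vnorm (T t *\<^sub>v (J *\<^sub>v \<phi>) - J *\<^sub>v (E t *\<^sub>v \<phi>)) \<le> C * t\<^sup>2 * vnorm \<phi>"
proof -
  obtain K where K: "\<And>t. 0 < t \<Longrightarrow> t \<le> 1 \<Longrightarrow> mat_l1_norm (T t * J - J * E t) \<le> K * t\<^sup>2"
    using first_order_expansion_intertwining_mat[OF assms] by blast
  have "vnorm (T t *\<^sub>v (J *\<^sub>v \<phi>) - J *\<^sub>v (E t *\<^sub>v \<phi>)) \<le> K * t\<^sup>2 * vnorm \<phi>"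
    if t: "0 < t" "t \<le> 1" and \<phi>: "\<phi> \<in> carrier_vec d" for t \<phi>
  proof -
    have c: "T t * J \<in> carrier_mat N d" "J * E t \<in> carrier_mat N d"
      using first_order_expansionD(2)[OF T, of t] first_order_expansionD(2)[OF E, of t] J by auto
    then have "T t *\<^sub>v (J *\<^sub>v \<phi>) - J *\<^sub>v (E t *\<^sub>v \<phi>) = (T t * J - J * E t) *\<^sub>v \<phi>"
      using \<phi> first_order_expansionD(2)[OF T, of t] first_order_expansionD(2)[OF E, of t] J
      by (simp add: minus_mult_distrib_mat_vec[of _ N d] assoc_mult_mat_vec[of _ N N _ d]
          assoc_mult_mat_vec[of _ N d _ d])
    also have "vnorm \<dots> \<le> mat_l1_norm (T t * J - J * E t) * vnorm \<phi>"
      using c \<phi> by (intro vnorm_mult_mat_vec_le[of _ N d] minus_carrier_mat) auto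
    also have "\<dots> \<le> K * t\<^sup>2 * vnorm \<phi>"
      by (intro mult_right_mono K[OF t] vnorm_nonneg)
    finally show ?thesis .
  qed
  then show ?thesis using that by blast
qed

lemma vnorm_iterate_unitary:
  assumes "unitary_mat n U" and "v \<in> carrier_vec n"
  shows "((\<lambda>w. U *\<^sub>v w) ^^ k) v \<in> carrier_vec n \<and> vnorm (((\<lambda>w. U *\<^sub>v w) ^^ k) v) = vnorm v"
  using assms by (induction k) (auto simp: vnorm_unitary unitary_mat_def)

lemma iterate_intertwining_error:
  assumes T: "unitary_mat N T" and E: "unitary_mat d E" and J: "J \<in> carrier_mat N d"
    and step: "\<And>\<phi>. \<phi> \<in> carrier_vec d \<Longrightarrow> vnorm (T *\<^sub>v (J *\<^sub>v \<phi>) - J *\<^sub>v (E *\<^sub>v \<phi>)) \<le> \<eta> * vnorm \<phi>"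
    and \<psi>: "\<psi> \<in> carrier_vec d"
  shows "vnorm (((\<lambda>v. T *\<^sub>v v) ^^ k) (J *\<^sub>v \<psi>) - J *\<^sub>v (((\<lambda>v. E *\<^sub>v v) ^^ k) \<psi>))
    \<le> real k * \<eta> * vnorm \<psi>"
proof (induction k)
  case 0
  have "J *\<^sub>v \<psi> - J *\<^sub>v \<psi> = 0\<^sub>v N" using J \<psi> by auto
  then show ?case by (simp add: vnorm_def)
next
  case (Suc k)
  have Tc: "T \<in> carrier_mat N N" and Ec: "E \<in> carrier_mat d d"
    using T E by (auto simp: unitary_mat_def)
  define x where "x = ((\<lambda>v. T *\<^sub>v v) ^^ k) (J *\<^sub>v \<psi>)"
  define p where "p = ((\<lambda>v. E *\<^sub>v v) ^^ k) \<psi>"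
  have x: "x \<in> carrier_vec N" unfolding x_def using vnorm_iterate_unitary[OF T] J \<psi> by auto
  have p: "p \<in> carrier_vec d" and norm_p: "vnorm p = vnorm \<psi>"
    unfolding p_def using vnorm_iterate_unitary[OF E \<psi>] by auto
  have Jp: "J *\<^sub>v p \<in> carrier_vec N" using J p by auto
  have "T *\<^sub>v x - J *\<^sub>v (E *\<^sub>v p) = T *\<^sub>v (x - J *\<^sub>v p) + (T *\<^sub>v (J *\<^sub>v p) - J *\<^sub>v (E *\<^sub>v p))"
    using Tc x Jp J Ec p by (intro eq_vecI) (auto simp: mult_minus_distrib_mat_vec)
  then have "vnorm (T *\<^sub>v x - J *\<^sub>v (E *\<^sub>v p))
      \<le> vnorm (T *\<^sub>v (x - J *\<^sub>v p)) + vnorm (T *\<^sub>v (J *\<^sub>v p) - J *\<^sub>v (E *\<^sub>v p))"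
    using Tc x Jp J Ec p by (auto intro!: vnorm_add_le[of _ N])
  also have "vnorm (T *\<^sub>v (x - J *\<^sub>v p)) = vnorm (x - J *\<^sub>v p)"
    using x Jp by (intro vnorm_unitary[OF T]) auto
  also have "\<dots> \<le> real k * \<eta> * vnorm \<psi>"
    using Suc by (simp add: x_def p_def)
  also have "vnorm (T *\<^sub>v (J *\<^sub>v p) - J *\<^sub>v (E *\<^sub>v p)) \<le> \<eta> * vnorm \<psi>"
    using step[OF p] norm_p by simp
  finally show ?case by (simp add: x_def p_def algebra_simps)
qed

section \<open>Kronecker products, diagonal and permutation matrices\<close>

lemma kron_dim [simp]:
  "dim_row (kron A B) = dim_row A * dim_row B" "dim_col (kron A B) = dim_col A * dim_col B"
  by (simp_all add: kron_def)

lemma kron_carrier_mat: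
  "A \<in> carrier_mat m m \<Longrightarrow> B \<in> carrier_mat k k \<Longrightarrow> kron A B \<in> carrier_mat (m * k) (m * k)"
  by (metis carrier_matD(1,2) carrier_matI kron_dim)

lemma index_kron:
  assumes "A \<in> carrier_mat m m" "B \<in> carrier_mat k k" "i < m * k" "j < m * k"
  shows "kron A B $$ (i, j) = A $$ (i div k, j div k) * B $$ (i mod k, j mod k)"
  using assms by (simp add: kron_def)

lemma index_mat_diag [simp]: "i < n \<Longrightarrow> j < n \<Longrightarrow> mat_diag n f $$ (i, j) = (if i = j then f i else 0)"
  by (simp add: mat_diag_def)

lemma dim_mat_diag [simp]: "dim_row (mat_diag n f) = n" "dim_col (mat_diag n f) = n"
  by (simp_all add: mat_diag_def)

lemma kron_mat_diag:
  assumes k: "k > 0"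
  shows "kron (mat_diag m f) (mat_diag k g) = mat_diag (m * k) (\<lambda>p. f (p div k) * g (p mod k))"
proof (rule eq_matI)
  fix i j assume "i < dim_row (mat_diag (m * k) (\<lambda>p. f (p div k) * g (p mod k)))"
    "j < dim_col (mat_diag (m * k) (\<lambda>p. f (p div k) * g (p mod k)))"
  then have i: "i < m * k" and j: "j < m * k" by auto
  then have "i div k < m" "j div k < m" by (auto simp: less_mult_imp_div_less)
  moreover have "i = j \<longleftrightarrow> i div k = j div k \<and> i mod k = j mod k"
    by (metis div_mult_mod_eq)
  ultimately show "kron (mat_diag m f) (mat_diag k g) $$ (i, j)
      = mat_diag (m * k) (\<lambda>p. f (p div k) * g (p mod k)) $$ (i, j)"
    using i j k by (simp add: index_kron[OF mat_diag_dim mat_diag_dim])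
qed auto

lemma index_mat_diag_conj:
  assumes "A \<in> carrier_mat n n" "i < n" "j < n"
  shows "(mat_diag n f * A * mat_diag n f) $$ (i, j) = f i * A $$ (i, j) * f j"
  using assms by (simp add: mat_diag_mult_left[of _ n n] mat_diag_mult_right[of _ n n])

lemma unitary_mat_diag:
  assumes "\<And>i. i < n \<Longrightarrow> cnj (f i) * f i = 1"
  shows "unitary_mat n (mat_diag n f)"
proof -
  have "mat_adjoint (mat_diag n f) = mat_diag n (\<lambda>i. cnj (f i))"
    by (rule eq_matI) auto
  then show ?thesis
    using assms by (auto simp: unitary_mat_def intro!: eq_matI)
qed

lemma mat_diag_square_one:
  assumes "\<And>i. i < n \<Longrightarrow> f i * f i = 1"
  shows "mat_diag n f * mat_diag n f = 1\<^sub>m n"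
  using assms by (auto intro!: eq_matI)

definition perm_mat :: "nat \<Rightarrow> (nat \<Rightarrow> nat) \<Rightarrow> complex mat" where
  "perm_mat n p = mat n n (\<lambda>(i, j). if j = p i then 1 else 0)"

lemma perm_mat_carrier [simp]: "perm_mat n p \<in> carrier_mat n n"
  by (simp add: perm_mat_def)

lemma dim_perm_mat [simp]: "dim_row (perm_mat n p) = n" "dim_col (perm_mat n p) = n"
  by (simp_all add: perm_mat_def)

lemma index_perm_mat [simp]: "i < n \<Longrightarrow> j < n \<Longrightarrow> perm_mat n p $$ (i, j) = (if j = p i then 1 else 0)"
  by (simp add: perm_mat_def)

lemma perm_mat_mult_vec:
  assumes v: "v \<in> carrier_vec n" and p: "\<And>i. i < n \<Longrightarrow> p i < n"
  shows "perm_mat n p *\<^sub>v v = vec n (\<lambda>i. v $ p i)"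
proof (rule eq_vecI)
  fix i assume "i < dim_vec (vec n (\<lambda>i. v $ p i))"
  then have i: "i < n" by simp
  have "(perm_mat n p *\<^sub>v v) $ i = (\<Sum>l<n. perm_mat n p $$ (i, l) * v $ l)"
    using i v by (intro index_mult_mat_vec_sum) auto
  also have "\<dots> = (\<Sum>l<n. if l = p i then v $ p i else 0)"
    using i by (intro sum.cong) auto
  also have "\<dots> = v $ p i" using p[OF i] by simp
  finally show "(perm_mat n p *\<^sub>v v) $ i = vec n (\<lambda>i. v $ p i) $ i"
    using i by simp
qed simp

lemma perm_mat_involution:
  assumes p: "\<And>i. i < n \<Longrightarrow> p i < n" and inv: "\<And>i. i < n \<Longrightarrow> p (p i) = i"
  shows "perm_mat n p * perm_mat n p = 1\<^sub>m n" and "unitary_mat n (perm_mat n p)"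
proof -
  have square: "perm_mat n p * perm_mat n p = 1\<^sub>m n"
  proof (rule eq_matI)
    fix i j assume "i < dim_row (1\<^sub>m n :: complex mat)" "j < dim_col (1\<^sub>m n :: complex mat)"
    then have i: "i < n" and j: "j < n" by auto
    have "(perm_mat n p * perm_mat n p) $$ (i, j) = (\<Sum>l<n. perm_mat n p $$ (i, l) * perm_mat n p $$ (l, j))"
      using i j by (intro index_mult_mat_sum) auto
    also have "\<dots> = (\<Sum>l<n. if l = p i then (if j = p l then 1 else 0) else 0)"
      using i j by (intro sum.cong) auto
    also have "\<dots> = 1\<^sub>m n $$ (i, j)"
      using i j p[OF i] inv[OF i] by auto
    finally show "(perm_mat n p * perm_mat n p) $$ (i, j) = 1\<^sub>m n $$ (i, j)" .
  qed auto
  have "mat_adjoint (perm_mat n p) = perm_mat n p"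
    using p inv by (intro eq_matI) auto
  then show "unitary_mat n (perm_mat n p)"
    using square by (simp add: unitary_mat_def)
  show "perm_mat n p * perm_mat n p = 1\<^sub>m n" by (rule square)
qed

lemma kron_perm_mat:
  assumes k: "k > 0" and pa: "\<And>i. i < m \<Longrightarrow> pa i < m" and pb: "\<And>i. i < k \<Longrightarrow> pb i < k"
  shows "kron (perm_mat m pa) (perm_mat k pb) = perm_mat (m * k) (\<lambda>i. pa (i div k) * k + pb (i mod k))"
proof (rule eq_matI)
  fix i j assume "i < dim_row (perm_mat (m * k) (\<lambda>i. pa (i div k) * k + pb (i mod k)))"
    "j < dim_col (perm_mat (m * k) (\<lambda>i. pa (i div k) * k + pb (i mod k)))"
  then have i: "i < m * k" and j: "j < m * k" by auto
  then have "i div k < m" "j div k < m" by (auto simp: less_mult_imp_div_less)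
  moreover have "j = pa (i div k) * k + pb (i mod k) \<longleftrightarrow>
      j div k = (pa (i div k) * k + pb (i mod k)) div k \<and> j mod k = (pa (i div k) * k + pb (i mod k)) mod k"
    by (metis div_mult_mod_eq)
  moreover have "pb (i mod k) < k" using pb k by simp
  ultimately show "kron (perm_mat m pa) (perm_mat k pb) $$ (i, j)
      = perm_mat (m * k) (\<lambda>i. pa (i div k) * k + pb (i mod k)) $$ (i, j)"
    using i j k by (simp add: index_kron[OF perm_mat_carrier perm_mat_carrier])
qed auto

lemma kron_one: "k > 0 \<Longrightarrow> kron (1\<^sub>m m) (1\<^sub>m k) = 1\<^sub>m (m * k)"
  using kron_mat_diag[of k m "\<lambda>_. 1" "\<lambda>_. 1"] by simp

lemma unitary_mat_one: "unitary_mat n (1\<^sub>m n)"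
  by (simp add: unitary_mat_def) (auto intro!: eq_matI)

lemma mat_adjoint_mult:
  fixes A B :: "complex mat"
  assumes A: "A \<in> carrier_mat n m" and B: "B \<in> carrier_mat m k"
  shows "mat_adjoint (A * B) = mat_adjoint B * mat_adjoint A"
proof (rule eq_matI)
  fix i j assume "i < dim_row (mat_adjoint B * mat_adjoint A)" "j < dim_col (mat_adjoint B * mat_adjoint A)"
  then have i: "i < k" and j: "j < n" using A B by auto
  have "mat_adjoint (A * B) $$ (i, j) = cnj ((A * B) $$ (j, i))"
    using A B i j by simp
  also have "\<dots> = (\<Sum>l<m. mat_adjoint B $$ (i, l) * mat_adjoint A $$ (l, j))"
    using A B i j by (simp only: index_mult_mat_sum[OF A B j i] cnj_sum complex_cnj_mult)
      (auto simp: mult.commute intro!: sum.cong)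
  also have "\<dots> = (mat_adjoint B * mat_adjoint A) $$ (i, j)"
    by (rule index_mult_mat_sum[symmetric]) (use A B i j in auto)
  finally show "mat_adjoint (A * B) $$ (i, j) = (mat_adjoint B * mat_adjoint A) $$ (i, j)" .
qed (use A B in auto)

lemma unitary_mat_mult:
  fixes A B :: "complex mat"
  assumes A: "unitary_mat n A" and B: "unitary_mat n B"
  shows "unitary_mat n (A * B)"
proof -
  have Ac: "A \<in> carrier_mat n n" and Bc: "B \<in> carrier_mat n n"
    and AA: "mat_adjoint A * A = 1\<^sub>m n" and BB: "mat_adjoint B * B = 1\<^sub>m n"
    using A B by (auto simp: unitary_mat_def)
  have "mat_adjoint (A * B) * (A * B) = mat_adjoint B * ((mat_adjoint A * A) * B)"
    using Ac Bc by (simp add: mat_adjoint_mult[OF Ac Bc] assoc_mult_mat[of _ n n _ n _ n])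
  then show ?thesis using AA BB Ac Bc by (simp add: unitary_mat_def)
qed

lemma msum_carrier:
  "(\<And>M. M \<in> set Ms \<Longrightarrow> M \<in> carrier_mat n n) \<Longrightarrow> msum n Ms \<in> carrier_mat n n"
  unfolding msum_def by (induction Ms) auto

lemma index_msum:
  "(\<And>M. M \<in> set Ms \<Longrightarrow> M \<in> carrier_mat n n) \<Longrightarrow> i < n \<Longrightarrow> j < n \<Longrightarrow>
   msum n Ms $$ (i, j) = (\<Sum>M\<leftarrow>Ms. M $$ (i, j))"
proof (induction Ms)
  case Nil
  then show ?case by (simp add: msum_def)
next
  case (Cons M Ms)
  then show ?case using msum_carrier[of Ms n] by (simp add: msum_def)
qed

section \<open>Simulation by repeating a cycle\<close>

lemma run_steps_append: "run_steps Ht (xs @ ys) v = run_steps Ht ys (run_steps Ht xs v)"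
  by (simp add: run_steps_def)

lemma run_steps_Cons:
  "run_steps Ht ((UA, UB, s) # xs) v = run_steps Ht xs (evol Ht s *\<^sub>v (kron UA UB *\<^sub>v v))"
  by (simp add: run_steps_def)

lemma run_steps_Nil [simp]: "run_steps Ht [] v = v"
  by (simp add: run_steps_def)

lemma evol_iterate:
  assumes H: "H \<in> carrier_mat n n" and v: "v \<in> carrier_vec n"
  shows "((\<lambda>w. evol H t *\<^sub>v w) ^^ k) v = evol H (real k * t) *\<^sub>v v"
proof (induction k)
  case 0
  then show ?case using v by (simp add: evol_zero[OF H])
next
  case (Suc k)
  have "((\<lambda>w. evol H t *\<^sub>v w) ^^ Suc k) v = (evol H t * evol H (real k * t)) *\<^sub>v v"
    using Suc evol_carrier[OF H] v by (simp add: assoc_mult_mat_vec[of _ n n _ n])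
  also have "\<dots> = evol H (real (Suc k) * t) *\<^sub>v v"
    by (simp add: evol_add[OF H] algebra_simps)
  finally show ?case .
qed

text \<open>In each pair of steps the second one, of duration \<open>0\<close>, applies \<open>U \<otimes> V\<close> again; for involutions
  this conjugates the evolution of the first step.\<close>

lemma run_steps_conjugated_pairs:
  assumes Hx: "Hx \<in> carrier_mat n n" and M: "M \<in> carrier_mat n n" and v: "v \<in> carrier_vec n"
    and UVs: "\<And>U V. (U, V) \<in> set UVs \<Longrightarrow> kron U V \<in> carrier_mat n n"
  shows "run_steps Hx (concat (map (\<lambda>(U, V). [(U, V, s), (U, V, 0)]) UVs)) (M *\<^sub>v v)
    = foldl (\<lambda>M Z. Z * evol Hx s * Z * M) M (map (\<lambda>(U, V). kron U V) UVs) *\<^sub>v v"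
  using M UVs
proof (induction UVs arbitrary: M)
  case (Cons UV UVs)
  obtain U V where UV: "UV = (U, V)" by force
  let ?Z = "kron U V" and ?E = "evol Hx s"
  have Z: "?Z \<in> carrier_mat n n" using Cons.prems UV by auto
  have E: "?E \<in> carrier_mat n n" by (rule evol_carrier[OF Hx])
  have "evol Hx 0 *\<^sub>v (?Z *\<^sub>v (?E *\<^sub>v (?Z *\<^sub>v (M *\<^sub>v v)))) = (?Z * ?E * ?Z * M) *\<^sub>v v"
    using Z E Cons.prems(1) v by (simp add: evol_zero[OF Hx] assoc_mult_mat_vec[of _ n n _ n])
  moreover have "?Z * ?E * ?Z * M \<in> carrier_mat n n" using Z E Cons.prems(1) by (meson mult_carrier_mat)
  ultimately show ?case
    using Cons.IH[of "?Z * ?E * ?Z * M"] Cons.prems UV by (simp add: run_steps_Cons)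
qed simp

lemma fine_subdivision:
  fixes t \<delta> \<epsilon> C :: real
  assumes "t > 0" "\<delta> > 0" "\<epsilon> > 0" "C \<ge> 0"
  obtains n :: nat where "n > 0" "t / n \<le> \<delta>" "t / n \<le> 1" "real n * (C * (t / n)\<^sup>2) \<le> \<epsilon>"
proof
  define n where "n = nat \<lceil>t / \<delta>\<rceil> + nat \<lceil>t\<rceil> + nat \<lceil>C * t\<^sup>2 / \<epsilon>\<rceil> + 1"
  have large: "t / \<delta> \<le> real n" "t \<le> real n" "C * t\<^sup>2 / \<epsilon> \<le> real n"
    unfolding n_def by linarith+
  show "n > 0" by (simp add: n_def)
  then show "t / n \<le> \<delta>" "t / n \<le> 1"
    using large assms by (simp_all add: divide_le_eq mult.commute)
  have "real n * (C * (t / n)\<^sup>2) = C * t\<^sup>2 / real n"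
    using \<open>n > 0\<close> by (simp add: power2_eq_square)
  also have "\<dots> \<le> \<epsilon>"
    using large(3) assms \<open>n > 0\<close> by (simp add: divide_le_eq mult.commute)
  finally show "real n * (C * (t / n)\<^sup>2) \<le> \<epsilon>" .
qed

text \<open>A protocol with trivial ancillas (\<open>nA = nB = 1\<close>): the local swap \<open>SA \<otimes> SB\<close> moves the
  input from the primed registers into \<open>A B\<close>, where it lies in the range of the embedding \<open>J\<close>;
  a cycle of duration \<open>\<tau>\<close> acts as \<open>T \<tau>\<close>, whose generator \<open>G\<close> agrees with that of the target
  on the range of \<open>J\<close>.\<close>

locale simulation_cycle =
  fixes dA dB dA' dB' :: nat and H H' SA SB J G :: "complex mat"
    and cycle :: "real \<Rightarrow> (complex mat \<times> complex mat \<times> real) list"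
    and T :: "real \<Rightarrow> complex mat"
  assumes hermitian_target: "hermitian_mat (dA' * dB') H'"
    and unitary_SA: "unitary_mat (wsA dA dA' 1) SA" and unitary_SB: "unitary_mat (wsA dB dB' 1) SB"
    and unitary_swap: "unitary_mat (wsA dA dA' 1 * wsA dB dB' 1) (kron SA SB)"
    and swap_involution: "kron SA SB * kron SA SB = 1\<^sub>m (wsA dA dA' 1 * wsA dB dB' 1)"
    and J_carrier: "J \<in> carrier_mat (wsA dA dA' 1 * wsA dB dB' 1) (dA' * dB')"
    and swap_input: "\<And>\<psi>. \<psi> \<in> carrier_vec (dA' * dB') \<Longrightarrow>
      kron SA SB *\<^sub>v place dA dA' 1 dB dB' 1 \<psi> (ket0 (dA * 1 * dB * 1)) = J *\<^sub>v \<psi>"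
    and cycle_steps: "\<And>\<tau> UA UB s. 0 \<le> \<tau> \<Longrightarrow> (UA, UB, s) \<in> set (cycle \<tau>) \<Longrightarrow>
      unitary_mat (wsA dA dA' 1) UA \<and> unitary_mat (wsA dB dB' 1) UB \<and> 0 \<le> s"
    and cycle_duration: "\<And>\<tau>. (\<Sum>(UA, UB, s)\<leftarrow>cycle \<tau>. s) = \<tau>"
    and run_cycle: "\<And>\<tau> v. v \<in> carrier_vec (wsA dA dA' 1 * wsA dB dB' 1) \<Longrightarrow>
      run_steps (ext_ham dA dA' 1 dB dB' 1 H) (cycle \<tau>) v = T \<tau> *\<^sub>v v"
    and unitary_cycle: "\<And>\<tau>. unitary_mat (wsA dA dA' 1 * wsA dB dB' 1) (T \<tau>)"
    and cycle_generator: "first_order_expansion (wsA dA dA' 1 * wsA dB dB' 1) T G"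
    and generator_intertwines: "G * J = J * ((- \<i>) \<cdot>\<^sub>m H')"
begin

abbreviation "N \<equiv> wsA dA dA' 1 * wsA dB dB' 1"
abbreviation "d \<equiv> dA' * dB'"
abbreviation "S \<equiv> kron SA SB"
abbreviation "input \<psi> \<equiv> place dA dA' 1 dB dB' 1 \<psi> (ket0 (dA * 1 * dB * 1))"

lemma S_carrier: "S \<in> carrier_mat N N"
  using unitary_swap by (simp add: unitary_mat_def)

lemma input_carrier: "input \<psi> \<in> carrier_vec N"
  by (simp add: place_def Let_def wsA_def)

lemma input_eq: "\<psi> \<in> carrier_vec d \<Longrightarrow> input \<psi> = S *\<^sub>v (J *\<^sub>v \<psi>)"
  using swap_input[of \<psi>] swap_involution S_carrier input_carrier
  by (metis assoc_mult_mat_vec one_mult_mat_vec)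

lemma run_cycles:
  assumes "v \<in> carrier_vec N"
  shows "run_steps (ext_ham dA dA' 1 dB dB' 1 H) (concat (replicate k (cycle \<tau>))) v
    = ((\<lambda>w. T \<tau> *\<^sub>v w) ^^ k) v"
  using assms
proof (induction k arbitrary: v)
  case (Suc k)
  have "T \<tau> *\<^sub>v v \<in> carrier_vec N"
    by (rule mult_mat_vec_carrier) (use unitary_cycle[of \<tau>] Suc.prems in \<open>auto simp: unitary_mat_def\<close>)
  have "run_steps (ext_ham dA dA' 1 dB dB' 1 H) (concat (replicate (Suc k) (cycle \<tau>))) v
      = run_steps (ext_ham dA dA' 1 dB dB' 1 H) (concat (replicate k (cycle \<tau>))) (T \<tau> *\<^sub>v v)"
    by (simp only: replicate_Suc concat.simps run_steps_append run_cycle[OF Suc.prems])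
  also have "\<dots> = ((\<lambda>w. T \<tau> *\<^sub>v w) ^^ Suc k) v"
    using Suc.IH[OF \<open>T \<tau> *\<^sub>v v \<in> carrier_vec N\<close>] by (simp add: funpow_Suc_right del: funpow.simps)
  finally show ?case .
qed simp

lemma cycle_step_error:
  obtains C where "C \<ge> 0" and "\<And>\<tau> \<phi>. 0 < \<tau> \<Longrightarrow> \<tau> \<le> 1 \<Longrightarrow> \<phi> \<in> carrier_vec d \<Longrightarrow>
    vnorm (T \<tau> *\<^sub>v (J *\<^sub>v \<phi>) - J *\<^sub>v (evol H' \<tau> *\<^sub>v \<phi>)) \<le> C * \<tau>\<^sup>2 * vnorm \<phi>"
proof -
  have H': "H' \<in> carrier_mat d d"
    using hermitian_target by (rule hermitian_mat_carrier)
  have "first_order_expansion d (\<lambda>t. evol H' t) ((- \<i>) \<cdot>\<^sub>m H')"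
    using first_order_expansion_evol[OF H', of 1] by simp
  then obtain C where C: "\<And>\<tau> \<phi>. 0 < \<tau> \<Longrightarrow> \<tau> \<le> 1 \<Longrightarrow> \<phi> \<in> carrier_vec d \<Longrightarrow>
      vnorm (T \<tau> *\<^sub>v (J *\<^sub>v \<phi>) - J *\<^sub>v (evol H' \<tau> *\<^sub>v \<phi>)) \<le> C * \<tau>\<^sup>2 * vnorm \<phi>"
    using first_order_expansion_intertwining[OF cycle_generator _ J_carrier generator_intertwines]
    by blast
  have "C * \<tau>\<^sup>2 * vnorm \<phi> \<le> max C 0 * \<tau>\<^sup>2 * vnorm \<phi>" for \<tau> \<phi>
    by (intro mult_right_mono vnorm_nonneg) auto
  with C show ?thesis
    using that[of "max C 0"] by (meson max.cobounded2 order_trans)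
qed

lemma cycles_error:
  assumes step: "\<And>\<phi>. \<phi> \<in> carrier_vec d \<Longrightarrow>
      vnorm (T \<tau> *\<^sub>v (J *\<^sub>v \<phi>) - J *\<^sub>v (evol H' \<tau> *\<^sub>v \<phi>)) \<le> \<eta> * vnorm \<phi>"
    and \<psi>: "\<psi> \<in> carrier_vec d"
  shows "vnorm (S *\<^sub>v ((\<lambda>w. T \<tau> *\<^sub>v w) ^^ k) (J *\<^sub>v \<psi>) - input (evol H' (real k * \<tau>) *\<^sub>v \<psi>))
    \<le> real k * \<eta> * vnorm \<psi>"
proof -
  have H': "H' \<in> carrier_mat d d"
    using hermitian_target by (rule hermitian_mat_carrier)
  let ?E = "evol H' \<tau>"
  let ?X = "((\<lambda>w. T \<tau> *\<^sub>v w) ^^ k) (J *\<^sub>v \<psi>)"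
  let ?Y = "J *\<^sub>v (((\<lambda>w. ?E *\<^sub>v w) ^^ k) \<psi>)"
  have E: "unitary_mat d ?E"
    by (rule evol_unitary[OF hermitian_target])
  have X: "?X \<in> carrier_vec N"
    using vnorm_iterate_unitary[OF unitary_cycle, of "J *\<^sub>v \<psi>"] J_carrier \<psi> by auto
  have Ek: "((\<lambda>w. ?E *\<^sub>v w) ^^ k) \<psi> \<in> carrier_vec d"
    using vnorm_iterate_unitary[OF E \<psi>] by auto
  then have Y: "?Y \<in> carrier_vec N" using J_carrier by auto
  have "input (evol H' (real k * \<tau>) *\<^sub>v \<psi>) = S *\<^sub>v ?Y"
    using input_eq[of "evol H' (real k * \<tau>) *\<^sub>v \<psi>"] evol_iterate[OF H' \<psi>, where t = \<tau> and k = k]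
      mult_mat_vec_carrier[OF evol_carrier[OF H'] \<psi>] by simp
  then have "S *\<^sub>v ?X - input (evol H' (real k * \<tau>) *\<^sub>v \<psi>) = S *\<^sub>v (?X - ?Y)"
    using S_carrier X Y by (simp add: mult_minus_distrib_mat_vec)
  then have "vnorm (S *\<^sub>v ?X - input (evol H' (real k * \<tau>) *\<^sub>v \<psi>)) = vnorm (?X - ?Y)"
    using X Y by (simp add: vnorm_unitary[OF unitary_swap])
  also have "\<dots> \<le> real k * \<eta> * vnorm \<psi>"
    by (rule iterate_intertwining_error[OF unitary_cycle E J_carrier step \<psi>])
  finally show ?thesis .
qed

text \<open>Segment \<open>j\<close> runs one cycle and is checked at time \<open>(j + 1) \<tau>\<close> after undoing the swap;
  the first segment also performs the swap.\<close>

definition segment :: "real \<Rightarrow> nat \<Rightarrow> (complex mat \<times> complex mat \<times> real) list \<times> (complex mat \<times> complex mat) \<times> real"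
  where "segment \<tau> j = ((if j = 0 then [(SA, SB, 0)] else []) @ cycle \<tau>, (SA, SB), real (Suc j) * \<tau>)"

lemma steps_until_segment:
  assumes "j < n"
  shows "concat (map fst (take (Suc j) (map (segment \<tau>) [0..<n])))
    = (SA, SB, 0) # concat (replicate (Suc j) (cycle \<tau>))"
proof -
  have "concat (map (fst \<circ> segment \<tau>) [0..<Suc i]) = (SA, SB, 0) # concat (replicate (Suc i) (cycle \<tau>))" for i
  proof (induction i)
    case (Suc i)
    have "[0..<Suc (Suc i)] = [0..<Suc i] @ [Suc i]" by simp
    moreover have "concat (replicate k (cycle \<tau>)) @ cycle \<tau> = cycle \<tau> @ concat (replicate k (cycle \<tau>))" for k
      by (induction k) auto
    ultimately show ?case
      using Suc.IH by (simp add: segment_def del: upt_Suc)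
  qed (simp add: segment_def)
  then show ?thesis
    using assms by (simp add: take_map)
qed

lemma run_until_segment:
  assumes "\<psi> \<in> carrier_vec d"
  shows "run_steps (ext_ham dA dA' 1 dB dB' 1 H) ((SA, SB, 0) # concat (replicate k (cycle \<tau>))) (input \<psi>)
    = ((\<lambda>w. T \<tau> *\<^sub>v w) ^^ k) (J *\<^sub>v \<psi>)"
proof -
  have Hx: "ext_ham dA dA' 1 dB dB' 1 H \<in> carrier_mat N N"
    by (simp add: ext_ham_def Let_def)
  have "J *\<^sub>v \<psi> \<in> carrier_vec N" using J_carrier assms by auto
  then show ?thesis
    by (simp only: run_steps_Cons evol_zero[OF Hx] swap_input[OF assms] one_mult_mat_vec run_cycles)
qed

lemma segments_local_unitaries:
  assumes "0 \<le> \<tau>"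
  shows "\<forall>seg\<in>set (map (segment \<tau>) [0..<n]). (\<forall>(UA, UB, s)\<in>set (fst seg).
      unitary_mat (wsA dA dA' 1) UA \<and> unitary_mat (wsA dB dB' 1) UB \<and> s \<ge> 0) \<and>
    unitary_mat (wsA dA dA' 1) (fst (fst (snd seg))) \<and> unitary_mat (wsA dB dB' 1) (snd (fst (snd seg)))"
  using assms cycle_steps unitary_SA unitary_SB by (fastforce simp: segment_def)

lemma segments_checkpoints:
  assumes "0 < \<tau>" "\<tau> \<le> \<delta>"
  shows "\<forall>j<length (map (segment \<tau>) [0..<n]). 0 < snd (snd (map (segment \<tau>) [0..<n] ! j)) \<and>
    (j = 0 \<longrightarrow> snd (snd (map (segment \<tau>) [0..<n] ! j)) \<le> \<delta>) \<and>
    (j > 0 \<longrightarrow> snd (snd (map (segment \<tau>) [0..<n] ! (j - 1))) < snd (snd (map (segment \<tau>) [0..<n] ! j)) \<and>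
      snd (snd (map (segment \<tau>) [0..<n] ! j)) - snd (snd (map (segment \<tau>) [0..<n] ! (j - 1))) \<le> \<delta>)"
  using assms by (auto simp: segment_def algebra_simps of_nat_diff add_pos_nonneg)

lemma segments_duration:
  "(\<Sum>seg\<leftarrow>map (segment \<tau>) [0..<n]. \<Sum>(UA, UB, s)\<leftarrow>fst seg. s) = real n * \<tau>"
proof -
  have "(\<Sum>(UA, UB, s)\<leftarrow>fst (segment \<tau> j). s) = \<tau>" for j
    using cycle_duration[of \<tau>] by (simp add: segment_def)
  then show ?thesis by (simp add: comp_def sum_list_triv)
qed

lemma segments_error:
  assumes step: "\<And>\<phi>. \<phi> \<in> carrier_vec d \<Longrightarrow>
      vnorm (T \<tau> *\<^sub>v (J *\<^sub>v \<phi>) - J *\<^sub>v (evol H' \<tau> *\<^sub>v \<phi>)) \<le> C * \<tau>\<^sup>2 * vnorm \<phi>"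
    and "C \<ge> 0" "real n * (C * \<tau>\<^sup>2) \<le> \<epsilon>"
  shows "\<forall>\<psi>. dim_vec \<psi> = dA' * dB' \<and> vnorm \<psi> = 1 \<longrightarrow>
    (\<forall>j<length (map (segment \<tau>) [0..<n]). \<exists>\<phi>. dim_vec \<phi> = dA * 1 * dB * 1 \<and>
      vnorm (kron (fst (fst (snd (map (segment \<tau>) [0..<n] ! j)))) (snd (fst (snd (map (segment \<tau>) [0..<n] ! j))))
          *\<^sub>v run_steps (ext_ham dA dA' 1 dB dB' 1 H) (concat (map fst (take (Suc j) (map (segment \<tau>) [0..<n]))))
                (input \<psi>)
        - place dA dA' 1 dB dB' 1 (evol H' (snd (snd (map (segment \<tau>) [0..<n] ! j))) *\<^sub>v \<psi>) \<phi>) \<le> \<epsilon>)"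
proof (intro allI impI exI conjI)
  fix \<psi> j assume \<psi>: "dim_vec \<psi> = dA' * dB' \<and> vnorm \<psi> = 1" and j: "j < length (map (segment \<tau>) [0..<n])"
  then have \<psi>c: "\<psi> \<in> carrier_vec d" and jn: "j < n" by (auto intro: carrier_vecI)
  have "real (Suc j) * (C * \<tau>\<^sup>2) \<le> real n * (C * \<tau>\<^sup>2)"
    using jn assms(2) by (intro mult_right_mono) auto
  then show "vnorm (kron (fst (fst (snd (map (segment \<tau>) [0..<n] ! j)))) (snd (fst (snd (map (segment \<tau>) [0..<n] ! j))))
          *\<^sub>v run_steps (ext_ham dA dA' 1 dB dB' 1 H) (concat (map fst (take (Suc j) (map (segment \<tau>) [0..<n]))))
                (input \<psi>)
        - place dA dA' 1 dB dB' 1 (evol H' (snd (snd (map (segment \<tau>) [0..<n] ! j))) *\<^sub>v \<psi>)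
            (ket0 (dA * 1 * dB * 1))) \<le> \<epsilon>"
    using cycles_error[OF step \<psi>c, of "Suc j"] \<psi> jn assms(3)
    by (simp only: steps_until_segment[OF jn] run_until_segment[OF \<psi>c] nth_map_upt) (simp add: segment_def)
qed (simp add: ket0_def)

theorem achieves_rate_one: "achieves dA dB H dA' dB' H' 1"
proof -
  obtain C where C: "C \<ge> 0" "\<And>\<tau> \<phi>. 0 < \<tau> \<Longrightarrow> \<tau> \<le> 1 \<Longrightarrow> \<phi> \<in> carrier_vec d \<Longrightarrow>
      vnorm (T \<tau> *\<^sub>v (J *\<^sub>v \<phi>) - J *\<^sub>v (evol H' \<tau> *\<^sub>v \<phi>)) \<le> C * \<tau>\<^sup>2 * vnorm \<phi>"
    using cycle_step_error by blast
  show ?thesis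
    unfolding achieves_def
  proof (intro conjI allI impI, goal_cases)
    case (2 t \<epsilon> \<delta>)
    then obtain n :: nat where n: "n > 0" "t / n \<le> \<delta>" "t / n \<le> 1" "real n * (C * (t / n)\<^sup>2) \<le> \<epsilon>"
      using fine_subdivision C(1) by metis
    define \<tau> where "\<tau> = t / n"
    have \<tau>: "0 < \<tau>" "\<tau> \<le> 1" "real n * \<tau> = t"
      using n \<open>t > 0\<close> by (simp_all add: \<tau>_def)
    show ?case
      apply (rule exI[of _ 1], rule exI[of _ 1], rule exI[of _ "map (segment \<tau>) [0..<n]"])
      using n \<tau> segments_local_unitaries[of \<tau> n] segments_checkpoints[of \<tau> \<delta> n] segments_duration[of \<tau> n]
        segments_error[OF C(2)[OF \<tau>(1,2)] C(1) n(4)[folded \<tau>_def]]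
      by (auto simp: \<tau>_def last_map segment_def)
  qed simp
qed

end

section \<open>Local compression\<close>

lemma mult_add_less: "(a :: nat) < m \<Longrightarrow> b < k \<Longrightarrow> a * k + b < m * k"
proof -
  assume "a < m" "b < k"
  then have "a * k + b < Suc a * k" by simp
  also have "\<dots> \<le> m * k" using \<open>a < m\<close> by (intro mult_le_mono1) simp
  finally show ?thesis .
qed

lemma compressed_index_bound:
  fixes q dA dA' dB dB' :: nat
  assumes "q < dA' * dB'" "dA' \<le> dA" "dB' \<le> dB"
  shows "q div dB' * dB + q mod dB' < dA * dB"
    and "(q div dB' * dB + q mod dB') div dB = q div dB'" "(q div dB' * dB + q mod dB') mod dB = q mod dB'"
proof -
  have "0 < dB'" using assms(1) by (metis gr0I mult_0_right not_less_zero)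
  have "q div dB' < dA" "q mod dB' < dB"
    using less_mult_imp_div_less[OF assms(1)] assms(2) apply linarith
    using \<open>0 < dB'\<close> assms(3) by (meson less_le_trans mod_less_divisor)
  then show "q div dB' * dB + q mod dB' < dA * dB"
    "(q div dB' * dB + q mod dB') div dB = q div dB'" "(q div dB' * dB + q mod dB') mod dB = q mod dB'"
    by (simp_all add: mult_add_less)
qed

text \<open>The compression of \<open>H\<close> on \<open>A \<otimes> B\<close> to the span of the basis vectors \<open>|a\<rangle>|b\<rangle>\<close> with
  \<open>a < dA'\<close> and \<open>b < dB'\<close>, in the Kronecker index conventions of both spaces.\<close>

definition local_compression :: "nat \<Rightarrow> nat \<Rightarrow> nat \<Rightarrow> complex mat \<Rightarrow> complex mat" where
  "local_compression dA' dB' dB H = mat (dA' * dB') (dA' * dB')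
     (\<lambda>(q, r). H $$ (q div dB' * dB + q mod dB', r div dB' * dB + r mod dB'))"

lemma local_compression_carrier: "local_compression dA' dB' dB H \<in> carrier_mat (dA' * dB') (dA' * dB')"
  by (simp add: local_compression_def)

lemma index_local_compression:
  "q < dA' * dB' \<Longrightarrow> r < dA' * dB' \<Longrightarrow>
   local_compression dA' dB' dB H $$ (q, r) = H $$ (q div dB' * dB + q mod dB', r div dB' * dB + r mod dB')"
  by (simp add: local_compression_def)

lemma hermitian_local_compression:
  assumes H: "hermitian_mat (dA * dB) H" and "dA' \<le> dA" "dB' \<le> dB"
  shows "hermitian_mat (dA' * dB') (local_compression dA' dB' dB H)"
proof -
  let ?C = "local_compression dA' dB' dB H"
  have "mat_adjoint ?C = ?C"
  proof (rule eq_matI)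
    fix i j assume "i < dim_row ?C" "j < dim_col ?C"
    then have i: "i < dA' * dB'" and j: "j < dA' * dB'" by (simp_all add: local_compression_def)
    then show "mat_adjoint ?C $$ (i, j) = ?C $$ (i, j)"
      using compressed_index_bound(1)[OF i assms(2,3)] compressed_index_bound(1)[OF j assms(2,3)]
      by (simp add: local_compression_def cnj_index_hermitian_mat[OF H])
  qed (simp_all add: local_compression_def)
  then show ?thesis
    unfolding hermitian_mat_def using local_compression_carrier by simp
qed

lemma local_compression_tensor_sum:
  assumes Ts: "\<forall>(J, K)\<in>set Ts. J \<in> carrier_mat dA dA \<and> K \<in> carrier_mat dB dB"
    and dims: "dA' \<le> dA" "dB' \<le> dB"
  shows "local_compression dA' dB' dB (msum (dA * dB) (map (\<lambda>(J, K). kron J K) Ts))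
    = msum (dA' * dB') (map (\<lambda>(J, K). kron (compress dA' J) (compress dB' K)) Ts)"
    (is "_ = msum _ ?Ms")
proof -
  have Ms: "M \<in> carrier_mat (dA' * dB') (dA' * dB')" if "M \<in> set ?Ms" for M
    using that by (auto simp: compress_def intro!: kron_carrier_mat)
  have "local_compression dA' dB' dB (msum (dA * dB) (map (\<lambda>(J, K). kron J K) Ts)) $$ (q, r) = msum (dA' * dB') ?Ms $$ (q, r)"
    if q: "q < dA' * dB'" and r: "r < dA' * dB'" for q r
  proof -
    note q' = compressed_index_bound[OF q dims] and r' = compressed_index_bound[OF r dims]
    have "0 < dB'" using q by (metis gr0I mult_0_right not_less_zero)
    then have "q div dB' < dA'" "r div dB' < dA'" "q mod dB' < dB'" "r mod dB' < dB'"
      using q r by (auto simp: less_mult_imp_div_less)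
    then have "kron J K $$ (q div dB' * dB + q mod dB', r div dB' * dB + r mod dB')
        = kron (compress dA' J) (compress dB' K) $$ (q, r)"
      if "J \<in> carrier_mat dA dA" "K \<in> carrier_mat dB dB" for J K
      using that q r q' r' by (simp add: kron_def compress_def carrier_matD)
    moreover have "msum (dA * dB) (map (\<lambda>(J, K). kron J K) Ts) $$ (q div dB' * dB + q mod dB', r div dB' * dB + r mod dB')
        = (\<Sum>M\<leftarrow>map (\<lambda>(J, K). kron J K) Ts. M $$ (q div dB' * dB + q mod dB', r div dB' * dB + r mod dB'))"
      using Ts q'(1) r'(1) by (intro index_msum) (auto intro: kron_carrier_mat)
    moreover have "msum (dA' * dB') ?Ms $$ (q, r) = (\<Sum>M\<leftarrow>?Ms. M $$ (q, r))"
      by (rule index_msum[OF Ms q r])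
    ultimately show ?thesis
      using Ts q r by (simp add: index_local_compression comp_def case_prod_beta cong: map_cong)
  qed
  then show ?thesis
    using msum_carrier[of ?Ms, OF Ms] by (intro eq_matI) (auto simp: local_compression_def)
qed

section \<open>Simulating the local compression\<close>

text \<open>On a workspace index \<open>a * d' + a'\<close> (system level \<open>a\<close>, primed level \<open>a'\<close>) the swap
  exchanges \<open>a\<close> and \<open>a'\<close> when \<open>a < d'\<close>, and the sign is \<open>+1\<close> exactly when \<open>a < d'\<close>.\<close>

definition register_swap :: "nat \<Rightarrow> nat \<Rightarrow> nat" where
  "register_swap d' \<alpha> = (if \<alpha> div d' < d' then \<alpha> mod d' * d' + \<alpha> div d' else \<alpha>)"

lemma register_swap_less:
  assumes "\<alpha> < d * d'" "d' \<le> d"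
  shows "register_swap d' \<alpha> < d * d'"
proof (cases "\<alpha> div d' < d'")
  case True
  have "0 < d'" using assms(1) by (metis gr0I mult_0_right not_less_zero)
  then have "\<alpha> mod d' < d" using assms(2) by (meson less_le_trans mod_less_divisor)
  then show ?thesis using True by (simp add: register_swap_def mult_add_less)
qed (use assms in \<open>simp add: register_swap_def\<close>)

lemma register_swap_involution: "register_swap d' (register_swap d' \<alpha>) = \<alpha>"
proof (cases "\<alpha> div d' < d'")
  case True
  then have "0 < d'" by auto
  then show ?thesis using True by (simp add: register_swap_def)
qed (simp add: register_swap_def)

definition register_sign :: "nat \<Rightarrow> nat \<Rightarrow> complex" where
  "register_sign d' \<alpha> = (if \<alpha> div d' < d' then 1 else -1)"

locale local_compression_simulation =
  fixes dA dB dA' dB' :: nat and H :: "complex mat"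
  assumes dA': "1 \<le> dA'" "dA' \<le> dA" and dB': "1 \<le> dB'" "dB' \<le> dB"
    and hermitian: "hermitian_mat (dA * dB) H"
begin

abbreviation "wA \<equiv> dA * dA'"
abbreviation "wB \<equiv> dB * dB'"
abbreviation "N \<equiv> wA * wB"
abbreviation "d \<equiv> dA' * dB'"

lemma dims_pos: "0 < dA" "0 < dB" "0 < dA'" "0 < dB'" "0 < wA" "0 < wB"
  using dA' dB' by auto

definition regA :: "nat \<Rightarrow> nat" where "regA p = p div wB div dA'"
definition regA' :: "nat \<Rightarrow> nat" where "regA' p = p div wB mod dA'"
definition regB :: "nat \<Rightarrow> nat" where "regB p = p mod wB div dB'"
definition regB' :: "nat \<Rightarrow> nat" where "regB' p = p mod wB mod dB'"

definition basis_index :: "nat \<Rightarrow> nat \<Rightarrow> nat \<Rightarrow> nat \<Rightarrow> nat" where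
  "basis_index a a' b b' = (a * dA' + a') * wB + (b * dB' + b')"

lemma regs_less:
  assumes "p < N"
  shows "regA p < dA" "regA' p < dA'" "regB p < dB" "regB' p < dB'"
proof -
  have "p div wB < wA" using assms by (simp add: less_mult_imp_div_less)
  moreover have "p mod wB < wB" using dims_pos by simp
  ultimately show "regA p < dA" "regA' p < dA'" "regB p < dB" "regB' p < dB'"
    using dims_pos by (simp_all add: regA_def regA'_def regB_def regB'_def less_mult_imp_div_less)
qed

lemma basis_index_regs: "basis_index (regA p) (regA' p) (regB p) (regB' p) = p"
  unfolding basis_index_def regA_def regA'_def regB_def regB'_def by (simp add: div_mult_mod_eq)

lemma basis_index_less: "a < dA \<Longrightarrow> a' < dA' \<Longrightarrow> b < dB \<Longrightarrow> b' < dB' \<Longrightarrow> basis_index a a' b b' < N"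
  unfolding basis_index_def by (intro mult_add_less) (simp_all add: mult_add_less mult.commute)

lemma regs_basis_index:
  assumes "a' < dA'" "b < dB" "b' < dB'"
  shows "regA (basis_index a a' b b') = a" "regA' (basis_index a a' b b') = a'"
    "regB (basis_index a a' b b') = b" "regB' (basis_index a a' b b') = b'"
proof -
  have "(m * k + r) div k = m" "(m * k + r) mod k = r" if "r < k" for m k r :: nat
    using that by simp_all
  moreover have "b * dB' + b' < wB" using assms by (metis mult_add_less mult.commute)
  ultimately have "basis_index a a' b b' div wB = a * dA' + a'" "basis_index a a' b b' mod wB = b * dB' + b'"
    unfolding basis_index_def by blast+
  then show "regA (basis_index a a' b b') = a" "regA' (basis_index a a' b b') = a'"
    "regB (basis_index a a' b b') = b" "regB' (basis_index a a' b b') = b'"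
    using assms by (simp_all add: regA_def regA'_def regB_def regB'_def)
qed

definition Hx :: "complex mat" where "Hx = ext_ham dA dA' 1 dB dB' 1 H"
abbreviation "H' \<equiv> local_compression dA' dB' dB H"

lemma Hx_carrier: "Hx \<in> carrier_mat N N"
  by (simp add: Hx_def ext_ham_def Let_def wsA_def)

lemma index_Hx:
  assumes "p < N" "q < N"
  shows "Hx $$ (p, q) = (if regA' p = regA' q \<and> regB' p = regB' q
    then H $$ (regA p * dB + regB p, regA q * dB + regB q) else 0)"
  using assms by (simp add: Hx_def ext_ham_def Let_def wsA_def ws_dec_def regA_def regA'_def regB_def regB'_def)

lemma system_index_less: "p < N \<Longrightarrow> regA p * dB + regB p < dA * dB"
  using regs_less by (simp add: mult_add_less)

lemma hermitian_Hx: "hermitian_mat N Hx"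
proof -
  have "mat_adjoint Hx = Hx"
  proof (rule eq_matI)
    fix p q assume "p < dim_row Hx" "q < dim_col Hx"
    then have p: "p < N" and q: "q < N" using Hx_carrier by auto
    then show "mat_adjoint Hx $$ (p, q) = Hx $$ (p, q)"
      using cnj_index_hermitian_mat[OF hermitian system_index_less[OF p] system_index_less[OF q]]
        Hx_carrier by (auto simp: index_Hx)
  qed (use Hx_carrier in auto)
  then show ?thesis using Hx_carrier by (simp add: hermitian_mat_def)
qed

definition signA :: "nat \<Rightarrow> complex" where "signA p = (if regA p < dA' then 1 else -1)"
definition signB :: "nat \<Rightarrow> complex" where "signB p = (if regB p < dB' then 1 else -1)"

definition "ZA = mat_diag wA (register_sign dA')"
definition "ZB = mat_diag wB (register_sign dB')"

definition flips :: "(complex mat \<times> complex mat) list" where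
  "flips = [(1\<^sub>m wA, 1\<^sub>m wB), (ZA, 1\<^sub>m wB), (1\<^sub>m wA, ZB), (ZA, ZB)]"

lemma flip_matrices: "map (\<lambda>(U, V). kron U V) flips
  = [mat_diag N (\<lambda>_. 1), mat_diag N signA, mat_diag N signB, mat_diag N (\<lambda>p. signA p * signB p)]"
proof -
  have diag: "kron (mat_diag wA f) (mat_diag wB g) = mat_diag N (\<lambda>p. f (p div wB) * g (p mod wB))" for f g
    by (rule kron_mat_diag[OF dims_pos(6)])
  have "kron (mat_diag wA f) (1\<^sub>m wB) = mat_diag N (\<lambda>p. f (p div wB))"
    "kron (1\<^sub>m wA) (mat_diag wB g) = mat_diag N (\<lambda>p. g (p mod wB))" for f g
    using diag[of f "\<lambda>_. 1"] diag[of "\<lambda>_. 1" g] by simp_all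
  then show ?thesis
    unfolding flips_def ZA_def ZB_def
    by (simp add: diag kron_one dims_pos signA_def[abs_def] signB_def[abs_def] register_sign_def regA_def regB_def)
qed

lemma local_flips_unitary: "(U, V) \<in> set flips \<Longrightarrow> unitary_mat wA U \<and> unitary_mat wB V"
  by (auto simp: flips_def ZA_def ZB_def register_sign_def unitary_mat_one intro!: unitary_mat_diag)

lemma flips_involution:
  "\<And>Z. Z \<in> set (map (\<lambda>(U, V). kron U V) flips) \<Longrightarrow> Z \<in> carrier_mat N N \<and> Z * Z = 1\<^sub>m N"
  unfolding flip_matrices by (auto simp: signA_def signB_def intro!: mat_diag_square_one)

lemma flips_carrier: "(U, V) \<in> set flips \<Longrightarrow> kron U V \<in> carrier_mat N N"
  using flips_involution by force

definition cycle :: "real \<Rightarrow> (complex mat \<times> complex mat \<times> real) list" where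
  "cycle \<tau> = concat (map (\<lambda>(U, V). [(U, V, \<tau> / 4), (U, V, 0)]) flips)"

definition T :: "real \<Rightarrow> complex mat" where
  "T \<tau> = foldl (\<lambda>M Z. Z * evol Hx (\<tau> / 4) * Z * M) (1\<^sub>m N) (map (\<lambda>(U, V). kron U V) flips)"

definition averaged_generator :: "complex mat" where
  "averaged_generator = foldl (\<lambda>B Z. Z * ((- \<i> * complex_of_real (1 / 4)) \<cdot>\<^sub>m Hx) * Z + B) (0\<^sub>m N N)
    (map (\<lambda>(U, V). kron U V) flips)"

lemma run_cycle: "v \<in> carrier_vec N \<Longrightarrow> run_steps Hx (cycle \<tau>) v = T \<tau> *\<^sub>v v"
  using run_steps_conjugated_pairs[OF Hx_carrier one_carrier_mat _ flips_carrier, where v = v and s = "\<tau> / 4"]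
  by (simp add: cycle_def T_def)

lemma unitary_T: "unitary_mat N (T \<tau>)"
proof -
  have "unitary_mat N (mat_diag N f)" if "\<And>p. f p * f p = 1" "\<And>p. cnj (f p) = f p" for f :: "nat \<Rightarrow> complex"
    using that by (intro unitary_mat_diag) auto
  then have "unitary_mat N (mat_diag N (\<lambda>_. 1))" "unitary_mat N (mat_diag N signA)"
    "unitary_mat N (mat_diag N signB)" "unitary_mat N (mat_diag N (\<lambda>p. signA p * signB p))"
    by (auto simp: signA_def signB_def unitary_mat_one)
  moreover have "unitary_mat N (evol Hx (\<tau> / 4))"
    by (rule evol_unitary[OF hermitian_Hx])
  ultimately show ?thesis
    unfolding T_def flip_matrices by (simp add: unitary_mat_mult unitary_mat_one)
qed

lemma T_expansion: "first_order_expansion N T averaged_generator"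
proof -
  have "first_order_expansion N (\<lambda>\<tau>. evol Hx (1 / 4 * \<tau>)) ((- \<i> * complex_of_real (1 / 4)) \<cdot>\<^sub>m Hx)"
    using Hx_carrier by (rule first_order_expansion_evol) auto
  then have "first_order_expansion N (\<lambda>\<tau>. foldl (\<lambda>M Z. Z * evol Hx (1 / 4 * \<tau>) * Z * M) (1\<^sub>m N)
      (map (\<lambda>(U, V). kron U V) flips)) averaged_generator"
    unfolding averaged_generator_def
    by (rule first_order_expansion_conjugates[OF _ first_order_expansion_one flips_involution])
  then show ?thesis
    unfolding T_def by (simp add: mult.commute)
qed

lemma index_averaged_generator:
  assumes p: "p < N" and q: "q < N"
  shows "averaged_generator $$ (p, q)
    = - \<i> / 4 * Hx $$ (p, q) * ((1 + signA p * signA q) * (1 + signB p * signB q))"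
proof -
  let ?G = "(- \<i> * complex_of_real (1 / 4)) \<cdot>\<^sub>m Hx"
  have G: "?G \<in> carrier_mat N N" using Hx_carrier by simp
  have conj: "(mat_diag N f * ?G * mat_diag N f) $$ (p, q) = f p * ?G $$ (p, q) * f q" for f
    by (rule index_mat_diag_conj[OF G p q])
  have dims: "dim_row (mat_diag N f * ?G * mat_diag N f) = N" "dim_col (mat_diag N f * ?G * mat_diag N f) = N"
    for f by simp_all
  show ?thesis
    unfolding averaged_generator_def flip_matrices
    by (simp only: foldl_Cons foldl_Nil index_add_mat dims conj p q index_zero_mat dim_row_mat dim_col_mat)
      (use p q Hx_carrier in \<open>simp add: algebra_simps\<close>)
qed

definition embed :: "nat \<Rightarrow> nat" where "embed q = basis_index (q div dB') 0 (q mod dB') 0"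

definition J :: "complex mat" where "J = mat N d (\<lambda>(p, q). if p = embed q then 1 else 0)"

definition inside :: "nat \<Rightarrow> bool" where
  "inside p \<longleftrightarrow> regA' p = 0 \<and> regB' p = 0 \<and> regA p < dA' \<and> regB p < dB'"

definition compressed :: "nat \<Rightarrow> nat" where "compressed p = regA p * dB' + regB p"

lemma J_carrier: "J \<in> carrier_mat N d"
  by (simp add: J_def)

lemma embed_props:
  assumes q: "q < d"
  shows "embed q < N" "regA (embed q) = q div dB'" "regA' (embed q) = 0"
    "regB (embed q) = q mod dB'" "regB' (embed q) = 0"
proof -
  have "q div dB' < dA'" "q mod dB' < dB'"
    using q dims_pos by (simp_all add: less_mult_imp_div_less)
  moreover from this(2) have "q mod dB' < dB" using dB' by linarith
  ultimately show "embed q < N" "regA (embed q) = q div dB'" "regA' (embed q) = 0"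
    "regB (embed q) = q mod dB'" "regB' (embed q) = 0"
    unfolding embed_def using dA' dims_pos by (auto intro!: basis_index_less simp: regs_basis_index)
qed

lemma inside_compressed_less: "inside p \<Longrightarrow> compressed p < d"
  unfolding inside_def compressed_def by (simp add: mult_add_less)

lemma eq_embed_iff:
  assumes q: "q < d"
  shows "p = embed q \<longleftrightarrow> inside p \<and> q = compressed p"
proof
  assume "p = embed q"
  moreover have "q div dB' < dA'" using q by (simp add: less_mult_imp_div_less)
  ultimately show "inside p \<and> q = compressed p"
    using embed_props[OF q] dims_pos by (simp add: inside_def compressed_def)
next
  assume "inside p \<and> q = compressed p"
  then have "q div dB' = regA p" "q mod dB' = regB p" "regA' p = 0" "regB' p = 0"
    by (auto simp: inside_def compressed_def)
  then show "p = embed q"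
    unfolding embed_def by (metis basis_index_regs)
qed

lemma index_mult_J:
  assumes M: "M \<in> carrier_mat N N" and p: "p < N" and q: "q < d"
  shows "(M * J) $$ (p, q) = M $$ (p, embed q)"
proof -
  have "(M * J) $$ (p, q) = (\<Sum>l<N. M $$ (p, l) * J $$ (l, q))"
    by (rule index_mult_mat_sum[OF M J_carrier p q])
  also have "\<dots> = (\<Sum>l<N. if l = embed q then M $$ (p, embed q) else 0)"
    using q by (intro sum.cong) (auto simp: J_def)
  finally show ?thesis using embed_props(1)[OF q] by simp
qed

lemma index_J_mult:
  assumes M: "M \<in> carrier_mat d d" and p: "p < N" and q: "q < d"
  shows "(J * M) $$ (p, q) = (if inside p then M $$ (compressed p, q) else 0)"
proof -
  have "(J * M) $$ (p, q) = (\<Sum>l<d. if inside p \<and> l = compressed p then M $$ (compressed p, q) else 0)"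
    using M p q by (subst index_mult_mat_sum[OF J_carrier M p q]) (auto simp: J_def eq_embed_iff intro!: sum.cong)
  then show ?thesis using inside_compressed_less by simp
qed

lemma index_mult_vec_J:
  assumes v: "v \<in> carrier_vec d" and p: "p < N"
  shows "(J *\<^sub>v v) $ p = (if inside p then v $ compressed p else 0)"
proof -
  have "(J *\<^sub>v v) $ p = (\<Sum>l<d. if inside p \<and> l = compressed p then v $ compressed p else 0)"
    using v p by (subst index_mult_mat_vec_sum[OF J_carrier v p]) (auto simp: J_def eq_embed_iff intro!: sum.cong)
  then show ?thesis using inside_compressed_less by simp
qed

text \<open>Averaging over the four sign flips removes every matrix element of \<open>Hx\<close> between
  sign sectors; on the sector containing the range of \<open>J\<close> what remains is \<open>H'\<close>.\<close>

lemma generator_intertwines: "averaged_generator * J = J * ((- \<i>) \<cdot>\<^sub>m H')"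
proof (rule eq_matI)
  fix p q assume "p < dim_row (J * ((- \<i>) \<cdot>\<^sub>m H'))" "q < dim_col (J * ((- \<i>) \<cdot>\<^sub>m H'))"
  then have p: "p < N" and q: "q < d" by (simp_all add: J_def local_compression_def)
  have G: "averaged_generator \<in> carrier_mat N N"
    using T_expansion by (rule first_order_expansionD)
  have H': "(- \<i>) \<cdot>\<^sub>m H' \<in> carrier_mat d d" using local_compression_carrier by simp
  note e = embed_props[OF q]
  have "(averaged_generator * J) $$ (p, q)
      = - \<i> / 4 * Hx $$ (p, embed q) * ((1 + signA p) * (1 + signB p))"
    using e q dims_pos by (simp add: index_mult_J[OF G p q] index_averaged_generator[OF p] signA_def signB_def
        less_mult_imp_div_less)
  also have "\<dots> = (if inside p then - \<i> * H' $$ (compressed p, q) else 0)"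
  proof (cases "inside p")
    case True
    then have "(regA p * dB' + regB p) div dB' * dB + (regA p * dB' + regB p) mod dB' = regA p * dB + regB p"
      using dims_pos by (simp add: inside_def)
    then have "H' $$ (compressed p, q) = Hx $$ (p, embed q)"
      using True e p q inside_compressed_less
      by (simp add: index_local_compression index_Hx inside_def compressed_def)
    then show ?thesis using True by (simp add: signA_def signB_def inside_def)
  next
    case False
    then have "Hx $$ (p, embed q) = 0 \<or> (1 + signA p) * (1 + signB p) = 0"
      using e p dims_pos by (auto simp: index_Hx inside_def signA_def signB_def)
    then show ?thesis using False by auto
  qed
  also have "\<dots> = (J * ((- \<i>) \<cdot>\<^sub>m H')) $$ (p, q)"
    using index_J_mult[OF H' p q] inside_compressed_less q by (auto simp: local_compression_def)
  finally show "(averaged_generator * J) $$ (p, q) = (J * ((- \<i>) \<cdot>\<^sub>m H')) $$ (p, q)" .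
qed (use first_order_expansionD(1)[OF T_expansion] in \<open>simp_all add: J_def local_compression_def\<close>)

definition "SA = perm_mat wA (register_swap dA')"
definition "SB = perm_mat wB (register_swap dB')"

definition swap :: "nat \<Rightarrow> nat" where
  "swap p = register_swap dA' (p div wB) * wB + register_swap dB' (p mod wB)"

lemma swap_less:
  assumes "p < N"
  shows "swap p < N"
proof -
  have "p div wB < dA * dA'" "p mod wB < dB * dB'"
    using assms dims_pos by (simp_all add: less_mult_imp_div_less)
  then show ?thesis
    unfolding swap_def using dA'(2) dB'(2) by (intro mult_add_less register_swap_less)
qed

lemma swap_involution: "swap (swap p) = p"
proof -
  have "register_swap dB' (p mod wB) < wB"
    using register_swap_less[of "p mod wB" dB dB'] dims_pos dB'(2) by simp
  moreover have "(m * k + r) div k = m" "(m * k + r) mod k = r" if "r < k" for m k r :: nat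
    using that by simp_all
  ultimately have "swap p div wB = register_swap dA' (p div wB)" "swap p mod wB = register_swap dB' (p mod wB)"
    unfolding swap_def by blast+
  then show ?thesis
    by (simp add: swap_def register_swap_involution div_mult_mod_eq)
qed

lemma kron_SA_SB: "kron SA SB = perm_mat N swap"
  unfolding SA_def SB_def swap_def using dA'(2) dB'(2)
  by (intro kron_perm_mat dims_pos register_swap_less) (auto simp: mult.commute)

lemma unitary_SA: "unitary_mat wA SA" and unitary_SB: "unitary_mat wB SB"
  unfolding SA_def SB_def using dA'(2) dB'(2)
  by (simp_all add: perm_mat_involution register_swap_less register_swap_involution)

lemma swap_unitary: "unitary_mat N (kron SA SB)" and swap_square: "kron SA SB * kron SA SB = 1\<^sub>m N"
  unfolding kron_SA_SB using swap_less swap_involution by (simp_all add: perm_mat_involution)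

lemma regs_swap:
  assumes p: "p < N"
  shows "regA (swap p) = (if regA p < dA' then regA' p else regA p)"
    "regA' (swap p) = (if regA p < dA' then regA p else regA' p)"
    "regB (swap p) = (if regB p < dB' then regB' p else regB p)"
    "regB' (swap p) = (if regB p < dB' then regB p else regB' p)"
proof -
  note r = regs_less[OF p]
  have "p div wB = regA p * dA' + regA' p" "p mod wB = regB p * dB' + regB' p"
    by (simp_all add: regA_def regA'_def regB_def regB'_def)
  then have "swap p = basis_index (if regA p < dA' then regA' p else regA p) (if regA p < dA' then regA p else regA' p)
      (if regB p < dB' then regB' p else regB p) (if regB p < dB' then regB p else regB' p)"
    using r by (simp add: swap_def basis_index_def register_swap_def)
  moreover have "(if regA p < dA' then regA p else regA' p) < dA'" "(if regB p < dB' then regB' p else regB p) < dB"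
    "(if regB p < dB' then regB p else regB' p) < dB'"
    using r dB'(2) by auto
  ultimately show "regA (swap p) = (if regA p < dA' then regA' p else regA p)"
    "regA' (swap p) = (if regA p < dA' then regA p else regA' p)"
    "regB (swap p) = (if regB p < dB' then regB' p else regB p)"
    "regB' (swap p) = (if regB p < dB' then regB p else regB' p)"
    by (simp_all add: regs_basis_index)
qed

definition input_state :: "complex vec \<Rightarrow> complex vec" where
  "input_state \<psi> = place dA dA' 1 dB dB' 1 \<psi> (ket0 (dA * 1 * dB * 1))"

lemma input_state_carrier: "input_state \<psi> \<in> carrier_vec N"
  by (simp add: input_state_def place_def Let_def wsA_def)

lemma index_input_state:
  assumes p: "p < N"
  shows "input_state \<psi> $ p = \<psi> $ (regA' p * dB' + regB' p) * (if regA p = 0 \<and> regB p = 0 then 1 else 0)"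
proof -
  have "regA p * dB + regB p < dA * dB" by (rule system_index_less[OF p])
  moreover have "regA p * dB + regB p = 0 \<longleftrightarrow> regA p = 0 \<and> regB p = 0"
    using dims_pos by simp
  ultimately show ?thesis
    using p by (simp add: input_state_def place_def Let_def wsA_def ws_dec_def ket0_def regA_def regA'_def regB_def regB'_def)
qed

lemma swap_input:
  assumes \<psi>: "\<psi> \<in> carrier_vec d"
  shows "kron SA SB *\<^sub>v input_state \<psi> = J *\<^sub>v \<psi>"
proof (rule eq_vecI)
  fix p assume "p < dim_vec (J *\<^sub>v \<psi>)"
  then have p: "p < N" by (simp add: J_def)
  have "(kron SA SB *\<^sub>v input_state \<psi>) $ p = input_state \<psi> $ swap p"
    unfolding kron_SA_SB using perm_mat_mult_vec[OF input_state_carrier swap_less] p by simp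
  also have "\<dots> = (if inside p then \<psi> $ compressed p else 0)"
    using regs_less[OF p] dA'(1) dB'(1)
    by (auto simp: index_input_state[OF swap_less[OF p]] regs_swap[OF p] inside_def compressed_def)
  also have "\<dots> = (J *\<^sub>v \<psi>) $ p"
    by (rule index_mult_vec_J[OF \<psi> p, symmetric])
  finally show "(kron SA SB *\<^sub>v input_state \<psi>) $ p = (J *\<^sub>v \<psi>) $ p" .
qed (simp add: SA_def SB_def J_def)

theorem achieves_local_compression: "achieves dA dB H dA' dB' H' 1"
proof -
  interpret sim: simulation_cycle dA dB dA' dB' H H' SA SB J averaged_generator cycle T
  proof unfold_locales
    show "hermitian_mat d H'"
      using hermitian dA'(2) dB'(2) by (rule hermitian_local_compression)
    show "\<And>\<tau> UA UB s. 0 \<le> \<tau> \<Longrightarrow> (UA, UB, s) \<in> set (cycle \<tau>) \<Longrightarrow>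
        unitary_mat (wsA dA dA' 1) UA \<and> unitary_mat (wsA dB dB' 1) UB \<and> 0 \<le> s"
      using local_flips_unitary by (auto simp: cycle_def wsA_def)
    show "(\<Sum>(UA, UB, s)\<leftarrow>cycle \<tau>. s) = \<tau>" for \<tau>
      by (simp add: cycle_def flips_def)
    show "\<And>\<psi>. \<psi> \<in> carrier_vec d \<Longrightarrow> kron SA SB *\<^sub>v place dA dA' 1 dB dB' 1 \<psi> (ket0 (dA * 1 * dB * 1)) = J *\<^sub>v \<psi>"
      using swap_input by (simp add: input_state_def)
  qed (use unitary_SA unitary_SB swap_unitary swap_square J_carrier run_cycle unitary_T T_expansion
      generator_intertwines in \<open>simp_all add: wsA_def Hx_def\<close>)
  show ?thesis by (rule sim.achieves_rate_one)
qed

end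

lemma sim_rate_ge_achieved: "achieves dA dB H dA' dB' H' \<gamma> \<Longrightarrow> ereal \<gamma> \<le> sim_rate dA dB H dA' dB' H'"
  unfolding sim_rate_def by (blast intro: Sup_upper)

theorem mainTheorem2:
  fixes dA dB dA' dB' :: nat and Ts :: "(complex mat \<times> complex mat) list"
  assumes "1 \<le> dA'" "dA' \<le> dA" "1 \<le> dB'" "dB' \<le> dB"
    and "\<forall>(J, K)\<in>set Ts. J \<in> carrier_mat dA dA \<and> K \<in> carrier_mat dB dB"
    and "hermitian_mat (dA * dB) (msum (dA * dB) (map (\<lambda>(J, K). kron J K) Ts))"
  shows "sim_rate dA dB (msum (dA * dB) (map (\<lambda>(J, K). kron J K) Ts))
                  dA' dB' (msum (dA' * dB') (map (\<lambda>(J, K). kron (compress dA' J) (compress dB' K)) Ts))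
         \<ge> 1"
proof -
  let ?H = "msum (dA * dB) (map (\<lambda>(J, K). kron J K) Ts)"
  interpret local_compression_simulation dA dB dA' dB' ?H
    using assms by unfold_locales
  have "achieves dA dB ?H dA' dB' (local_compression dA' dB' dB ?H) 1"
    by (rule achieves_local_compression)
  then show ?thesis
    using sim_rate_ge_achieved local_compression_tensor_sum[OF assms(5,2,4)] by (simp add: one_ereal_def)
qed

end
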